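(* In the QC setting, let $\theta$ be the a.s. finite random variable with $\mathbf{x}(i)\to\theta\mathbf{1}$ a.s., and let $r=\frac1N\sum_{n=1}^N x_n(0)$ be the initial average. Then (1) $\mathbb{E}[\theta]=r$, and (2) $\mathbb{E}[(\theta-r)^2]\le\frac{2|\mathcal{M}|\Delta^2}{3N^2}\sum_{j\ge0}\alpha^2(j)$.
   Context: QC setting. Let $N\ge 2$; all random objects live on one probability space. $\{L(i)\}_{i\ge0}$ is an i.i.d. sequence of random graph Laplacians $L(i)=D(i)-A(i)$, where $A(i)$ is the adjacency matrix (symmetric, $\{0,1\}$-valued, zero diagonal) of a random undirected simple graph on $\{1,\dots,N\}$, $D(i)=\mathrm{diag}(d_1(i),\dots,d_N(i))$ with $d_n(i)$ the degree of node $n$, and $\Omega_n(i)=\{l:A_{nl}(i)=1\}$. Link failures at a given time may be arbitrarily correlated across edges. Let $\overline{L}=\mathbb{E}[L(i)]$ with eigenvalues $0=\lambda_1(\overline{L})\le\lambda_2(\overline{L})\le\cdots\le\lambda_N(\overline{L})$; assume $\lambda_2(\overline{L})>0$. $\mathcal{M}$ denotes the set of realizable edges (those appearing in the random graph with positive probability). Quantizer: step $\Delta>0$, $q(y)=k\Delta$ if $(k-\tfrac12)\Delta\le y<(k+\tfrac12)\Delta$, $k\in\mathbb{Z}$. Dither: $\{\nu_{nl}(i)\}$ i.i.d. uniform on $[-\Delta/2,\Delta/2)$, independent of $\{L(i)\}$. Weights: deterministic $\alpha(i)>0$ with $\sum_i\alpha(i)=\infty$, $\sum_i\alpha^2(i)<\infty$.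 QC recursion: $x_n(i+1)=(1-\alpha(i)d_n(i))x_n(i)+\alpha(i)\sum_{l\in\Omega_n(i)}q(x_l(i)+\nu_{nl}(i))$, with deterministic $\mathbf{x}(0)\in\mathbb{R}^N$. With $\varepsilon_{nl}(i)=q(x_l(i)+\nu_{nl}(i))-(x_l(i)+\nu_{nl}(i))$, $\Upsilon_n(i)=-\sum_{l\in\Omega_n(i)}\nu_{nl}(i)$, $\Psi_n(i)=-\sum_{l\in\Omega_n(i)}\varepsilon_{nl}(i)$, this reads $\mathbf{x}(i+1)=\mathbf{x}(i)-\alpha(i)[L(i)\mathbf{x}(i)+\Upsilon(i)+\Psi(i)]$. Conditionally on $\mathbf{x}(0),\{L(j),\Upsilon(j),\Psi(j)\}_{j<i}$ and $L(i)$, the $\varepsilon_{nl}(i)$ are i.i.d. uniform on $[-\Delta/2,\Delta/2)$ (as are the $\nu_{nl}(i)$). *)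

theory Defs
  imports "HOL-Probability.Probability" "Jordan_Normal_Form.Char_Poly"
begin

text \<open>Uniform quantizer with step D: q(y) = k D iff (k - 1/2) D \<le> y < (k + 1/2) D.\<close>
definition quant :: "real \<Rightarrow> real \<Rightarrow> real" where
  "quant D y = D * of_int \<lfloor>y / D + 1/2\<rfloor>"

text \<open>A graph on nodes 0..N-1 is given by its set of (ordered, symmetric) edge pairs.\<close>
definition nbrs :: "(nat \<times> nat) set \<Rightarrow> nat \<Rightarrow> nat set" where
  "nbrs G n = {l. (n, l) \<in> G}"

definition simple_graph_on :: "nat \<Rightarrow> (nat \<times> nat) set \<Rightarrow> bool" where
  "simple_graph_on N G \<longleftrightarrow> G \<subseteq> {..<N} \<times> {..<N} \<and> (\<forall>n l. (n, l) \<in> G \<longrightarrow> (l, n) \<in> G)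
     \<and> (\<forall>n. (n, n) \<notin> G)"

definition laplacian :: "nat \<Rightarrow> (nat \<times> nat) set \<Rightarrow> real mat" where
  "laplacian N G = mat N N (\<lambda>(n, l). if n = l then real (card (nbrs G n))
                                     else if (n, l) \<in> G then -1 else 0)"

definition mean_laplacian :: "'w measure \<Rightarrow> nat \<Rightarrow> ('w \<Rightarrow> (nat \<times> nat) set) \<Rightarrow> real mat" where
  "mean_laplacian M N G = mat N N (\<lambda>(n, l). integral\<^sup>L M (\<lambda>\<omega>. laplacian N (G \<omega>) $$ (n, l)))"

text \<open>Eigenvalues with multiplicity (roots of the characteristic polynomial) in
  increasing order; lambda_k is the k-th one (1-based).\<close>
definition eigenvalue_k :: "nat \<Rightarrow> real mat \<Rightarrow> real" where
  "eigenvalue_k k A = sorted_list_of_multiset (proots (char_poly A)) ! (k - 1)"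

definition realizable_edges :: "'w measure \<Rightarrow> nat \<Rightarrow> ('w \<Rightarrow> (nat \<times> nat) set) \<Rightarrow> (nat \<times> nat) set" where
  "realizable_edges M N G = {(n, l). n < l \<and> l < N \<and> measure M {\<omega> \<in> space M. (n, l) \<in> G \<omega>} > 0}"

primrec qc_state :: "real \<Rightarrow> (nat \<Rightarrow> real) \<Rightarrow> (nat \<Rightarrow> 'w \<Rightarrow> (nat \<times> nat) set)
    \<Rightarrow> (nat \<Rightarrow> nat \<Rightarrow> nat \<Rightarrow> 'w \<Rightarrow> real) \<Rightarrow> (nat \<Rightarrow> real) \<Rightarrow> nat \<Rightarrow> 'w \<Rightarrow> nat \<Rightarrow> real" where
  "qc_state D \<alpha> G \<nu> x0 0 \<omega> = x0"
| "qc_state D \<alpha> G \<nu> x0 (Suc i) \<omega> = (\<lambda>n.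
      (1 - \<alpha> i * real (card (nbrs (G i \<omega>) n))) * qc_state D \<alpha> G \<nu> x0 i \<omega> n
      + \<alpha> i * (\<Sum>l\<in>nbrs (G i \<omega>) n. quant D (qc_state D \<alpha> G \<nu> x0 i \<omega> l + \<nu> i n l \<omega>)))"

end

theory Submission
  imports Defs
begin

(* Let S(i) = sum_n x_n(i) be the sum of the node states.  The Laplacian is
   symmetric with zero row sums, so 1^T L = 0 and the noiseless part of the QC update preserves S and
   S(i+1) = S(i) + alpha(i) e(i), where e(i) = sum over links (n,l) of G(i) of the dithered
   quantization error q(x_l(i) + nu_nl(i)) - x_l(i).  With subtractive dither, each such
   error is a function of one fresh uniform dither, which is independent of the graph
   sequence and of all earlier dithers; it has mean zero and second moment at most D^2/4,
   and errors on different links use independent dithers.  Hence E[h e(i)] = 0 for every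
   bounded function h of the past, and E[e(i)^2] <= D^2/4 E|G(i)| <= D^2 |M| / 2.  This gives
   E[(S(i) - S(k))^2] <= D^2 |M| / 2 * sum_{k<=j<i} alpha(j)^2, and since S(i) -> N theta
   almost surely, Fatou's lemma yields E[(N theta - S(k))^2] <= D^2 |M| / 2 * sum_{j>=k} alpha(j)^2.
   For k = 0 this is the variance bound (the constant 1/2 is below the claimed 2/3).  The
   mean E[N theta - S(k)] = N E[theta] - S(0) does not depend on k, while its square is
   bounded by the vanishing tail sums; so E[theta] = r. *)

lemma (in prob_space) square_expectation_le:
  fixes f :: "'a \<Rightarrow> real"
  assumes "integrable M f" "integrable M (\<lambda>\<omega>. (f \<omega>)\<^sup>2)"
  shows "(expectation f)\<^sup>2 \<le> expectation (\<lambda>\<omega>. (f \<omega>)\<^sup>2)"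
  using variance_eq[OF assms] variance_positive[of f] by simp

lemma (in prob_space) indep_set_mono:
  assumes "indep_set A B" "A' \<subseteq> A" "B' \<subseteq> B"
  shows "indep_set A' B'"
  unfolding indep_set_def
  by (rule indep_sets_mono_sets[OF assms(1)[unfolded indep_set_def]])
     (use assms in \<open>auto split: bool.split\<close>)

lemma (in prob_space) joint_distr_indep_set:
  assumes X: "random_variable S X" and Y: "random_variable T Y"
    and ind: "indep_set (sigma_sets (space M) {X -` A \<inter> space M | A. A \<in> sets S})
                        (sigma_sets (space M) {Y -` A \<inter> space M | A. A \<in> sets T})"
  shows "distr M S X \<Otimes>\<^sub>M distr M T Y = distr M (S \<Otimes>\<^sub>M T) (\<lambda>x. (X x, Y x))"
proof -
  have XY: "random_variable (S \<Otimes>\<^sub>M T) (\<lambda>x. (X x, Y x))"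
    using X Y by (rule measurable_Pair)
  interpret X: prob_space "distr M S X" by (rule prob_space_distr) fact
  interpret Y: prob_space "distr M T Y" by (rule prob_space_distr) fact
  show ?thesis
  proof (rule pair_measure_eqI)
    show "sigma_finite_measure (distr M S X)" ..
    show "sigma_finite_measure (distr M T Y)" ..
    fix A B assume A: "A \<in> sets (distr M S X)" and B: "B \<in> sets (distr M T Y)"
    have "emeasure (distr M (S \<Otimes>\<^sub>M T) (\<lambda>x. (X x, Y x))) (A \<times> B)
        = emeasure M ((\<lambda>x. (X x, Y x)) -` (A \<times> B) \<inter> space M)"
      using A B by (intro emeasure_distr[OF XY]) auto
    also have "(\<lambda>x. (X x, Y x)) -` (A \<times> B) \<inter> space M = (X -` A \<inter> space M) \<inter> (Y -` B \<inter> space M)"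
      by auto
    also have "emeasure M \<dots> = ennreal (prob (X -` A \<inter> space M) * prob (Y -` B \<inter> space M))"
      using indep_setD[OF ind, of "X -` A \<inter> space M" "Y -` B \<inter> space M"] A B
      by (auto simp: emeasure_eq_measure)
    also have "\<dots> = emeasure M (X -` A \<inter> space M) * emeasure M (Y -` B \<inter> space M)"
      by (simp add: emeasure_eq_measure measure_nonneg ennreal_mult)
    also have "\<dots> = emeasure (distr M S X) A * emeasure (distr M T Y) B"
      using X Y A B by (simp add: emeasure_distr)
    finally show "emeasure (distr M S X) A * emeasure (distr M T Y) B
        = emeasure (distr M (S \<Otimes>\<^sub>M T) (\<lambda>x. (X x, Y x))) (A \<times> B)"
      by simp
  qed simp
qed

lemma option_set_minus_None: "J - {None} = Some ` {k. Some k \<in> J}"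
proof
  show "J - {None} \<subseteq> Some ` {k. Some k \<in> J}"
  proof
    fix z assume z: "z \<in> J - {None}"
    then obtain k where "z = Some k" by (cases z) auto
    with z show "z \<in> Some ` {k. Some k \<in> J}" by auto
  qed
qed auto

section \<open>The dithered quantizer\<close>

definition dither_law :: "real \<Rightarrow> real measure" where
  "dither_law D = uniform_measure lborel {-D/2..<D/2}"

lemma prob_space_dither_law: "D > 0 \<Longrightarrow> prob_space (dither_law D)"
  unfolding dither_law_def by (intro prob_space_uniform_measure) auto

lemma sets_dither_law[simp, measurable_cong]: "sets (dither_law D) = sets borel"
  unfolding dither_law_def by simp

lemma AE_dither_law_range: "D > 0 \<Longrightarrow> AE t in dither_law D. t \<in> {-D/2..<D/2}"
  unfolding dither_law_def by (intro AE_uniform_measureI) auto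

lemma quant_measurable[measurable]: "quant D \<in> borel_measurable borel"
  unfolding quant_def by measurable

lemma quant_error_bound: "D > 0 \<Longrightarrow> \<bar>quant D y - y\<bar> \<le> D / 2"
proof -
  assume D: "D > 0"
  define k where "k = \<lfloor>y / D + 1/2\<rfloor>"
  have "of_int k \<le> y/D + 1/2" "y/D + 1/2 < of_int k + 1"
    unfolding k_def by linarith+
  then have "D * of_int k \<le> D * (y/D + 1/2)" "D * (y/D + 1/2) < D * (of_int k + 1)"
    using D by (auto intro: mult_left_mono mult_strict_left_mono)
  moreover have "D * (y/D + 1/2) = y + D/2" using D by (simp add: field_simps)
  ultimately have "D * of_int k \<le> y + D/2" "y + D/2 < D * of_int k + D"
    using D by (simp_all add: algebra_simps)
  then show ?thesis unfolding quant_def k_def[symmetric] abs_le_iff by linarith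
qed

text \<open>Subtractive dither: for a dither value t, the error q(c + t) - c takes only two values,
  depending on whether t lies in the top interval of length D phi, where phi is the
  fractional part of c/D.\<close>
lemma dithered_quant_error_eq:
  assumes D: "D > 0" and t: "t \<in> {-D/2..<D/2}"
  shows "quant D (c + t) - c = - D * (c/D - of_int \<lfloor>c/D\<rfloor>)
           + D * indicator {D/2 - D * (c/D - of_int \<lfloor>c/D\<rfloor>)..<D/2} t"
proof -
  define \<phi> where "\<phi> = c/D - of_int \<lfloor>c/D\<rfloor>"
  have \<phi>: "0 \<le> \<phi>" "\<phi> < 1" unfolding \<phi>_def by linarith+
  define s where "s = t/D + 1/2"
  have s: "0 \<le> s" "s < 1" using t D unfolding s_def by (auto simp: field_simps)
  have "(c + t)/D + 1/2 = of_int \<lfloor>c/D\<rfloor> + (\<phi> + s)"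
    unfolding \<phi>_def s_def using D by (simp add: field_simps)
  then have "\<lfloor>(c + t)/D + 1/2\<rfloor> = \<lfloor>c/D\<rfloor> + \<lfloor>\<phi> + s\<rfloor>"
    by simp
  then have q: "quant D (c + t) = D * of_int \<lfloor>c/D\<rfloor> + D * of_int \<lfloor>\<phi> + s\<rfloor>"
    unfolding quant_def by (simp add: algebra_simps)
  have c: "c = D * of_int \<lfloor>c/D\<rfloor> + D * \<phi>" unfolding \<phi>_def using D by (simp add: field_simps)
  show ?thesis unfolding \<phi>_def[symmetric]
  proof (cases "\<phi> + s \<ge> 1")
    case True
    then have "\<lfloor>\<phi> + s\<rfloor> = 1" using \<phi> s by linarith
    moreover have "t \<in> {D/2 - D * \<phi>..<D/2}" using True t D unfolding s_def
      by (auto simp: field_simps)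
    ultimately show "quant D (c + t) - c = - D * \<phi> + D * indicator {D/2 - D * \<phi>..<D/2} t"
      by (subst q, subst c, simp)
  next
    case False
    then have "\<lfloor>\<phi> + s\<rfloor> = 0" using \<phi> s by linarith
    moreover have "t \<notin> {D/2 - D * \<phi>..<D/2}" using False t D unfolding s_def
      by (auto simp: field_simps)
    ultimately show "quant D (c + t) - c = - D * \<phi> + D * indicator {D/2 - D * \<phi>..<D/2} t"
      by (subst q, subst c, simp)
  qed
qed

lemma measure_dither_law_top:
  assumes D: "D > 0" and \<phi>: "0 \<le> \<phi>" "\<phi> < 1"
  shows "measure (dither_law D) {D/2 - D * \<phi>..<D/2} = \<phi>"
proof -
  let ?B = "{D/2 - D * \<phi>..<D/2}"
  have "measure (dither_law D) ?B = measure lborel ({-D/2..<D/2} \<inter> ?B) / measure lborel {-D/2..<D/2}"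
    unfolding dither_law_def using D by (subst measure_uniform_measure) auto
  also have "{-D/2..<D/2} \<inter> ?B = ?B" using \<phi> D
    by (auto simp: mult_less_cancel_left2 intro: order.trans[of _ "D/2 - D"])
  also have "measure lborel ?B = D * \<phi>" using \<phi> D by (simp add: measure_def)
  also have "measure lborel {-D/2..<D/2} = D" using D by (simp add: measure_def)
  finally show ?thesis using D by simp
qed

lemma dithered_quant_error_two_point:
  fixes c D :: real
  assumes D: "D > 0"
  defines "\<phi> \<equiv> c/D - of_int \<lfloor>c/D\<rfloor>"
  shows "0 \<le> \<phi>" "\<phi> < 1"
    and "AE t in dither_law D. quant D (c + t) - c = - D * \<phi> + D * indicator {D/2 - D * \<phi>..<D/2} t"
    and "(\<lambda>t. quant D (c + t) - c) \<in> borel_measurable (dither_law D)"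
proof -
  show "0 \<le> \<phi>" "\<phi> < 1" unfolding \<phi>_def by linarith+
  show "AE t in dither_law D. quant D (c + t) - c = - D * \<phi> + D * indicator {D/2 - D * \<phi>..<D/2} t"
    using AE_dither_law_range[OF D]
    by eventually_elim (use dithered_quant_error_eq[OF D] in \<open>simp add: \<phi>_def\<close>)
  show "(\<lambda>t. quant D (c + t) - c) \<in> borel_measurable (dither_law D)"
    by (simp add: measurable_cong_sets[OF sets_dither_law refl])
qed

lemma dithered_quant_error_mean:
  assumes D: "D > 0"
  shows "integrable (dither_law D) (\<lambda>t. quant D (c + t) - c)"
    and "(\<integral>t. quant D (c + t) - c \<partial>dither_law D) = 0"
proof -
  interpret P: prob_space "dither_law D" using prob_space_dither_law[OF D] .
  define \<phi> where "\<phi> = c/D - of_int \<lfloor>c/D\<rfloor>"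
  define B where "B = {D/2 - D * \<phi>..<D/2}"
  note two_point = dithered_quant_error_two_point[OF D, of c, folded \<phi>_def, folded B_def]
  have B: "B \<in> sets (dither_law D)" "measure (dither_law D) B = \<phi>"
    unfolding B_def using measure_dither_law_top[OF D two_point(1,2)] by simp_all
  have int_B: "integrable (dither_law D) (indicator B :: real \<Rightarrow> real)"
    by (rule integrable_real_indicator[OF B(1)]) (simp add: less_top[symmetric])
  show "integrable (dither_law D) (\<lambda>t. quant D (c + t) - c)"
    by (rule integrable_cong_AE_imp[OF _ two_point(4), of "\<lambda>t. - D * \<phi> + D * indicator B t"])
       (use int_B two_point(3) in \<open>auto intro!: integrable_add integrable_mult_right elim: AE_mp\<close>)
  have "(\<integral>t. quant D (c + t) - c \<partial>dither_law D) = (\<integral>t. - D * \<phi> + D * indicator B t \<partial>dither_law D)"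
    by (rule integral_cong_AE[OF two_point(4) _ two_point(3)]) (use B in simp)
  also have "\<dots> = 0"
    using int_B B P.prob_space by (simp add: Int_absorb2)
  finally show "(\<integral>t. quant D (c + t) - c \<partial>dither_law D) = 0" .
qed

text \<open>The second moment of the dithered quantization error is D^2 phi (1 - phi) <= D^2/4.\<close>
lemma dithered_quant_error_second_moment:
  assumes D: "D > 0"
  shows "(\<integral>t. (quant D (c + t) - c)\<^sup>2 \<partial>dither_law D) \<le> D\<^sup>2 / 4"
proof -
  interpret P: prob_space "dither_law D" using prob_space_dither_law[OF D] .
  define \<phi> where "\<phi> = c/D - of_int \<lfloor>c/D\<rfloor>"
  define B where "B = {D/2 - D * \<phi>..<D/2}"
  note two_point = dithered_quant_error_two_point[OF D, of c, folded \<phi>_def, folded B_def]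
  have B: "B \<in> sets (dither_law D)" "measure (dither_law D) B = \<phi>"
    unfolding B_def using measure_dither_law_top[OF D two_point(1,2)] by simp_all
  have int_B: "integrable (dither_law D) (indicator B :: real \<Rightarrow> real)"
    by (rule integrable_real_indicator[OF B(1)]) (simp add: less_top[symmetric])
  have sq: "AE t in dither_law D.
      (quant D (c + t) - c)\<^sup>2 = D\<^sup>2 * \<phi>\<^sup>2 + (D\<^sup>2 - 2 * D\<^sup>2 * \<phi>) * indicator B t"
    using two_point(3) proof eventually_elim
    case (elim t) show ?case
      unfolding elim by (cases "t \<in> B") (simp_all add: power2_eq_square algebra_simps)
  qed
  have "(\<integral>t. (quant D (c + t) - c)\<^sup>2 \<partial>dither_law D)
      = (\<integral>t. D\<^sup>2 * \<phi>\<^sup>2 + (D\<^sup>2 - 2 * D\<^sup>2 * \<phi>) * indicator B t \<partial>dither_law D)"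
    by (rule integral_cong_AE[OF _ _ sq]) (use two_point(4) B in simp_all)
  also have "\<dots> = D\<^sup>2 * (\<phi> * (1 - \<phi>))"
    using int_B B P.prob_space by (simp add: Int_absorb2 algebra_simps power2_eq_square)
  also have "\<dots> \<le> D\<^sup>2 * (1/4)"
  proof (rule mult_left_mono)
    have "0 \<le> (\<phi> - 1/2)\<^sup>2" by simp
    then show "\<phi> * (1 - \<phi>) \<le> 1/4" by (simp add: algebra_simps power2_eq_square)
  qed simp
  finally show ?thesis by simp
qed

lemma product_prob_space_dither: "D > 0 \<Longrightarrow> product_prob_space (\<lambda>_. dither_law D)"
  by (simp add: product_prob_space_def product_prob_space_axioms_def product_sigma_finite_def
      prob_space_dither_law prob_space_imp_sigma_finite)

lemma integral_dither_product_component: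
  fixes g :: "real \<Rightarrow> real"
  assumes D: "D > 0" and k: "k \<in> I" and g: "g \<in> borel_measurable borel"
  shows "(\<integral>v. g (v k) \<partial>PiM I (\<lambda>_. dither_law D)) = (\<integral>t. g t \<partial>dither_law D)"
proof -
  have "distr (PiM I (\<lambda>_. dither_law D)) (dither_law D) (\<lambda>v. v k) = dither_law D"
    by (rule distr_PiM_component[OF prob_space_dither_law[OF D] k])
  moreover have "integral\<^sup>L (distr (PiM I (\<lambda>_. dither_law D)) (dither_law D) (\<lambda>v. v k)) g
      = (\<integral>v. g (v k) \<partial>PiM I (\<lambda>_. dither_law D))"
    by (rule integral_distr) (use k g in \<open>auto simp: measurable_cong_sets[OF sets_dither_law refl]\<close>)
  ultimately show ?thesis by simp
qed

lemma integral_dither_product_pair: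
  fixes g1 g2 :: "real \<Rightarrow> real"
  assumes D: "D > 0" and I: "finite I" and k: "k1 \<in> I" "k2 \<in> I" "k1 \<noteq> k2"
    and g: "integrable (dither_law D) g1" "integrable (dither_law D) g2"
  shows "(\<integral>v. g1 (v k1) * g2 (v k2) \<partial>PiM I (\<lambda>_. dither_law D))
    = (\<integral>t. g1 t \<partial>dither_law D) * (\<integral>t. g2 t \<partial>dither_law D)"
proof -
  interpret PS: product_prob_space "\<lambda>_. dither_law D" by (rule product_prob_space_dither[OF D])
  define f where "f i = (if i = k1 then g1 else if i = k2 then g2 else (\<lambda>_. 1))" for i
  have "(\<integral>v. (\<Prod>i\<in>I. f i (v i)) \<partial>PiM I (\<lambda>_. dither_law D)) = (\<Prod>i\<in>I. integral\<^sup>L (dither_law D) (f i))"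
    by (rule PS.product_integral_prod[OF I]) (auto simp: f_def g)
  moreover have "(\<Prod>i\<in>I. f i (v i)) = g1 (v k1) * g2 (v k2)" for v
  proof -
    have "(\<Prod>i\<in>I. f i (v i)) = (\<Prod>i\<in>{k1,k2}. f i (v i))"
      by (rule prod.mono_neutral_right) (use I k in \<open>auto simp: f_def\<close>)
    then show ?thesis using k by (simp add: f_def)
  qed
  moreover have "(\<Prod>i\<in>I. integral\<^sup>L (dither_law D) (f i)) = (\<Prod>i\<in>{k1,k2}. integral\<^sup>L (dither_law D) (f i))"
    by (rule prod.mono_neutral_right)
       (use I k prob_space.prob_space[OF prob_space_dither_law[OF D]] in \<open>auto simp: f_def\<close>)
  ultimately show ?thesis using k by (simp add: f_def)
qed

section \<open>The QC iteration as a function of a sample path\<close>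

lemma sum_nbrs:
  fixes f :: "nat \<Rightarrow> real"
  assumes "simple_graph_on N g"
  shows "(\<Sum>l\<in>nbrs g n. f l) = (\<Sum>l<N. of_bool ((n, l) \<in> g) * f l)"
proof -
  have "nbrs g n = {..<N} \<inter> {l. (n, l) \<in> g}"
    using assms unfolding simple_graph_on_def nbrs_def by auto
  moreover have "(\<Sum>l<N. of_bool ((n, l) \<in> g) * f l) = (\<Sum>l<N. if (n, l) \<in> g then f l else 0)"
    by (intro sum.cong) auto
  ultimately show ?thesis by (simp add: sum.inter_filter)
qed

lemma card_nbrs:
  assumes "simple_graph_on N g"
  shows "real (card (nbrs g n)) = (\<Sum>l<N. of_bool ((n, l) \<in> g))"
  using sum_nbrs[OF assms, where f="\<lambda>_. 1::real" and n=n] by simp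

text \<open>A sample path consists of a graph sequence and an array of dither values indexed by
  (time, receiving node, sending node).\<close>
type_synonym sample = "(nat \<Rightarrow> (nat \<times> nat) set) \<times> (nat \<times> nat \<times> nat \<Rightarrow> real)"

definition sample_space :: "sample measure" where
  "sample_space = PiM UNIV (\<lambda>_. count_space UNIV) \<Otimes>\<^sub>M PiM UNIV (\<lambda>_. borel)"

text \<open>The QC recursion driven by a sample path p; the neighbour sums range over the node
  set {..<N} so that the state is visibly a measurable function of p.\<close>
primrec qc_path :: "real \<Rightarrow> (nat \<Rightarrow> real) \<Rightarrow> nat \<Rightarrow> (nat \<Rightarrow> real) \<Rightarrow> nat \<Rightarrow> sample \<Rightarrow> nat \<Rightarrow> real" where
  "qc_path D \<alpha> N x0 0 p = x0"
| "qc_path D \<alpha> N x0 (Suc i) p = (\<lambda>n.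
      (1 - \<alpha> i * real (card (nbrs (fst p i) n))) * qc_path D \<alpha> N x0 i p n
      + \<alpha> i * (\<Sum>l<N. of_bool ((n, l) \<in> fst p i) * quant D (qc_path D \<alpha> N x0 i p l + snd p (i, n, l))))"

lemma graph_functional_measurable: "(\<lambda>p. F (fst p i) :: real) \<in> borel_measurable sample_space"
proof -
  have "(\<lambda>p. fst p i) \<in> measurable sample_space (count_space UNIV)"
    unfolding sample_space_def by measurable
  then show ?thesis by (rule measurable_compose) simp
qed

lemma dither_coordinate_measurable: "(\<lambda>p. snd p k) \<in> borel_measurable sample_space"
  unfolding sample_space_def by measurable

lemma qc_path_measurable: "(\<lambda>p. qc_path D \<alpha> N x0 i p n) \<in> borel_measurable sample_space"
proof (induction i arbitrary: n)
  case 0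
  then show ?case by simp
next
  case (Suc i)
  have q: "(\<lambda>p. quant D (qc_path D \<alpha> N x0 i p l + snd p (i, n, l))) \<in> borel_measurable sample_space" for l
    by (rule measurable_compose[OF _ quant_measurable])
       (intro borel_measurable_add Suc dither_coordinate_measurable)
  show ?case
    by (simp only: qc_path.simps)
       (intro borel_measurable_add borel_measurable_times borel_measurable_sum borel_measurable_diff
         graph_functional_measurable q Suc borel_measurable_const)
qed

section \<open>The probabilistic setting\<close>

locale qc_setting = prob_space M
  for M :: "'w measure" +
  fixes N :: nat and D :: real
    and G :: "nat \<Rightarrow> 'w \<Rightarrow> (nat \<times> nat) set"
    and \<nu> :: "nat \<Rightarrow> nat \<Rightarrow> nat \<Rightarrow> 'w \<Rightarrow> real"
    and \<alpha> :: "nat \<Rightarrow> real" and x0 :: "nat \<Rightarrow> real" and \<theta> :: "'w \<Rightarrow> real"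
  assumes N: "N \<ge> 2"
    and simple: "\<And>i \<omega>. \<omega> \<in> space M \<Longrightarrow> simple_graph_on N (G i \<omega>)"
    and G_indep: "indep_vars (\<lambda>_. count_space UNIV) G UNIV"
    and G_ident: "\<And>i. distr M (count_space UNIV) (G i) = distr M (count_space UNIV) (G 0)"
    and D: "D > 0"
    and \<nu>_meas: "\<And>i n l. \<nu> i n l \<in> borel_measurable M"
    and \<nu>_indep: "indep_vars (\<lambda>_. borel) (\<lambda>(i, n, l). \<nu> i n l) (UNIV \<times> {..<N} \<times> {..<N})"
    and \<nu>_unif: "\<And>i n l. n < N \<Longrightarrow> l < N \<Longrightarrow>
        distr M lborel (\<nu> i n l) = uniform_measure lborel {-D/2..<D/2}"
    and \<nu>_G_indep: "indep_set
        (sets (vimage_algebra (space M) (\<lambda>\<omega> i. G i \<omega>) (PiM UNIV (\<lambda>_. count_space UNIV))))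
        (sets (vimage_algebra (space M) (\<lambda>\<omega>. restrict (\<lambda>(i, n, l). \<nu> i n l \<omega>) (UNIV \<times> {..<N} \<times> {..<N}))
           (PiM (UNIV \<times> {..<N} \<times> {..<N}) (\<lambda>_. borel))))"
    and \<alpha>_pos: "\<And>i. \<alpha> i > 0"
    and \<alpha>_sq: "summable (\<lambda>i. (\<alpha> i)\<^sup>2)"
    and \<theta>_meas: "\<theta> \<in> borel_measurable M"
    and \<theta>_lim: "AE \<omega> in M. \<forall>n<N. (\<lambda>i. qc_state D \<alpha> G \<nu> x0 i \<omega> n) \<longlonglongrightarrow> \<theta> \<omega>"
begin

abbreviation "x \<equiv> qc_state D \<alpha> G \<nu> x0"
abbreviation "path_state \<equiv> qc_path D \<alpha> N x0"
abbreviation "Idx \<equiv> UNIV \<times> {..<N} \<times> {..<N}"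
abbreviation "node_pairs \<equiv> {..<N} \<times> {..<N}"

definition dither_var :: "nat \<times> nat \<times> nat \<Rightarrow> 'w \<Rightarrow> real" where
  "dither_var = (\<lambda>(i, n, l). \<nu> i n l)"

lemma dither_var_measurable: "dither_var k \<in> borel_measurable M"
  unfolding dither_var_def using \<nu>_meas by (cases k) auto

lemma graph_measurable: "G i \<in> measurable M (count_space UNIV)"
  using G_indep unfolding indep_vars_def by auto

text \<open>The information available up to time j: the whole graph sequence together with the
  dithers used before time j (later dithers are replaced by 0).\<close>
definition history :: "nat \<Rightarrow> 'w \<Rightarrow> sample" where
  "history j \<omega> = ((\<lambda>i. G i \<omega>), (\<lambda>(i, n, l). if i < j \<and> n < N \<and> l < N then \<nu> i n l \<omega> else 0))"

definition step_indices :: "nat \<Rightarrow> (nat \<times> nat \<times> nat) set" where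
  "step_indices j = {j} \<times> node_pairs"

definition fresh_dither :: "nat \<Rightarrow> 'w \<Rightarrow> nat \<times> nat \<times> nat \<Rightarrow> real" where
  "fresh_dither j \<omega> = (\<lambda>k\<in>step_indices j. dither_var k \<omega>)"

lemma state_eq_path: "\<omega> \<in> space M \<Longrightarrow> i \<le> j \<Longrightarrow> n < N \<Longrightarrow> path_state i (history j \<omega>) n = x i \<omega> n"
proof (induction i arbitrary: n)
  case 0
  then show ?case by simp
next
  case (Suc i)
  have s: "simple_graph_on N (G i \<omega>)" using simple Suc.prems by simp
  have "(\<Sum>l<N. of_bool ((n, l) \<in> fst (history j \<omega>) i)
            * quant D (path_state i (history j \<omega>) l + snd (history j \<omega>) (i, n, l)))
      = (\<Sum>l<N. of_bool ((n, l) \<in> G i \<omega>) * quant D (x i \<omega> l + \<nu> i n l \<omega>))"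
    using Suc by (intro sum.cong refl) (auto simp: history_def)
  also have "\<dots> = (\<Sum>l\<in>nbrs (G i \<omega>) n. quant D (x i \<omega> l + \<nu> i n l \<omega>))"
    by (rule sum_nbrs[OF s, symmetric])
  finally show ?case using Suc by (simp add: history_def)
qed

lemma history_measurable: "history j \<in> measurable M sample_space"
proof -
  have "(\<lambda>\<omega>. \<lambda>i. G i \<omega>) \<in> measurable M (PiM UNIV (\<lambda>_. count_space UNIV))"
    by (rule measurable_PiM_single'[OF graph_measurable]) auto
  moreover have "(\<lambda>\<omega>. \<lambda>k. (\<lambda>(i, n, l). if i < j \<and> n < N \<and> l < N then \<nu> i n l \<omega> else 0) k)
      \<in> measurable M (PiM UNIV (\<lambda>_. borel))"
  proof (rule measurable_PiM_single')
    fix k :: "nat \<times> nat \<times> nat"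
    obtain i n l where k: "k = (i, n, l)" by (cases k) auto
    show "(\<lambda>\<omega>. (\<lambda>(i, n, l). if i < j \<and> n < N \<and> l < N then \<nu> i n l \<omega> else 0) k) \<in> borel_measurable M"
      unfolding k using \<nu>_meas by auto
  qed auto
  ultimately show ?thesis unfolding history_def[abs_def] sample_space_def by (intro measurable_Pair) auto
qed

lemma state_measurable: "n < N \<Longrightarrow> (\<lambda>\<omega>. x i \<omega> n) \<in> borel_measurable M"
proof -
  assume n: "n < N"
  have "(\<lambda>\<omega>. path_state i (history i \<omega>) n) \<in> borel_measurable M"
    by (rule measurable_compose[OF history_measurable qc_path_measurable])
  then show ?thesis by (rule measurable_cong[THEN iffD1, rotated]) (use state_eq_path n in auto)
qed

definition state_sum :: "nat \<Rightarrow> 'w \<Rightarrow> real" where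
  "state_sum i \<omega> = (\<Sum>n<N. x i \<omega> n)"

definition edge_error :: "nat \<Rightarrow> nat \<Rightarrow> nat \<Rightarrow> 'w \<Rightarrow> real" where
  "edge_error j n l \<omega> = of_bool ((n, l) \<in> G j \<omega>) * (quant D (x j \<omega> l + \<nu> j n l \<omega>) - x j \<omega> l)"

definition total_error :: "nat \<Rightarrow> 'w \<Rightarrow> real" where
  "total_error j \<omega> = (\<Sum>(n, l)\<in>node_pairs. edge_error j n l \<omega>)"

text \<open>Conservation: because the graph is symmetric, the Laplacian part of the update does not
  change the state sum, which therefore moves only by the weighted total error.\<close>
lemma state_sum_step:
  assumes \<omega>: "\<omega> \<in> space M"
  shows "state_sum (Suc j) \<omega> = state_sum j \<omega> + \<alpha> j * total_error j \<omega>"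
proof -
  define g where "g = G j \<omega>"
  define X where "X = x j \<omega>"
  define q where "q n l = quant D (X l + \<nu> j n l \<omega>)" for n l
  have s: "simple_graph_on N g" using simple \<omega> unfolding g_def by simp
  have sym: "(n, l) \<in> g \<longleftrightarrow> (l, n) \<in> g" for n l using s unfolding simple_graph_on_def by blast
  have step: "x (Suc j) \<omega> n = (1 - \<alpha> j * (\<Sum>l<N. of_bool ((n, l) \<in> g))) * X n
      + \<alpha> j * (\<Sum>l<N. of_bool ((n, l) \<in> g) * q n l)" for n
    by (simp add: card_nbrs[OF s] sum_nbrs[OF s] g_def[symmetric] X_def[symmetric] q_def)
  have swap: "(\<Sum>n<N. \<Sum>l<N. of_bool ((n, l) \<in> g) * X n) = (\<Sum>n<N. \<Sum>l<N. of_bool ((n, l) \<in> g) * X l)"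
  proof -
    have "(\<Sum>n<N. \<Sum>l<N. of_bool ((n, l) \<in> g) * X l) = (\<Sum>l<N. \<Sum>n<N. of_bool ((n, l) \<in> g) * X l)"
      by (rule sum.swap)
    also have "\<dots> = (\<Sum>l<N. \<Sum>n<N. of_bool ((l, n) \<in> g) * X l)"
      using sym by simp
    finally show ?thesis by simp
  qed
  have err: "total_error j \<omega> = (\<Sum>n<N. \<Sum>l<N. of_bool ((n, l) \<in> g) * q n l)
      - (\<Sum>n<N. \<Sum>l<N. of_bool ((n, l) \<in> g) * X l)"
    unfolding total_error_def edge_error_def sum.cartesian_product[symmetric]
    by (simp add: g_def[symmetric] X_def[symmetric] q_def[symmetric] algebra_simps sum_subtractf)
  have "state_sum (Suc j) \<omega> = (\<Sum>n<N. X n) - \<alpha> j * (\<Sum>n<N. \<Sum>l<N. of_bool ((n, l) \<in> g) * X n)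
      + \<alpha> j * (\<Sum>n<N. \<Sum>l<N. of_bool ((n, l) \<in> g) * q n l)"
    unfolding state_sum_def step
    by (simp add: algebra_simps sum.distrib sum_subtractf sum_distrib_left sum_distrib_right)
  then show ?thesis unfolding err swap by (simp add: state_sum_def X_def[symmetric] algebra_simps)
qed

subsection \<open>Independence of the history and the fresh dither\<close>

text \<open>The elementary sources of randomness: the graph sequence (index None) and each single
  dither variable (index Some k), each represented by the events it generates.\<close>
definition source_events :: "(nat \<times> nat \<times> nat) option \<Rightarrow> 'w set set" where
  "source_events z = (case z of
       None \<Rightarrow> sets (vimage_algebra (space M) (\<lambda>\<omega> i. G i \<omega>) (PiM UNIV (\<lambda>_. count_space UNIV)))
     | Some k \<Rightarrow> sets (vimage_algebra (space M) (dither_var k) borel))"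

abbreviation "dither_events \<equiv> sets (vimage_algebra (space M) (\<lambda>\<omega>. restrict (\<lambda>(i, n, l). \<nu> i n l \<omega>) Idx)
           (PiM Idx (\<lambda>_. borel)))"

lemma source_events_Some: "source_events (Some k) = {dither_var k -` A \<inter> space M | A. A \<in> sets borel}"
  unfolding source_events_def by (simp add: sets_vimage_algebra2)

lemma graph_event_source: "G i -` A \<inter> space M \<in> source_events None"
proof -
  let ?f = "\<lambda>\<omega> i. G i \<omega>"
  let ?P = "PiM UNIV (\<lambda>_. count_space (UNIV :: (nat \<times> nat) set set))"
  have "?f \<in> measurable (vimage_algebra (space M) ?f ?P) ?P"
    by (rule measurable_vimage_algebra1) (auto simp: space_PiM)
  then have "(\<lambda>\<omega>. ?f \<omega> i) \<in> measurable (vimage_algebra (space M) ?f ?P) (count_space UNIV)"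
    by (rule measurable_compose[OF _ measurable_component_singleton]) simp
  then have "(\<lambda>\<omega>. ?f \<omega> i) -` A \<inter> space (vimage_algebra (space M) ?f ?P) \<in> sets (vimage_algebra (space M) ?f ?P)"
    by (rule measurable_sets) simp
  then show ?thesis unfolding source_events_def by simp
qed

lemma dither_source_in_dither_events: "k \<in> Idx \<Longrightarrow> A \<in> source_events (Some k) \<Longrightarrow> A \<in> dither_events"
proof -
  assume k: "k \<in> Idx" and A: "A \<in> source_events (Some k)"
  then obtain B where B: "B \<in> sets borel" "A = dither_var k -` B \<inter> space M"
    unfolding source_events_Some by auto
  let ?f = "\<lambda>\<omega>. restrict (\<lambda>(i, n, l). \<nu> i n l \<omega>) Idx"
  let ?P = "PiM Idx (\<lambda>_. borel :: real measure)"
  have "?f \<in> measurable (vimage_algebra (space M) ?f ?P) ?P"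
    by (rule measurable_vimage_algebra1) (auto simp: space_PiM)
  then have "(\<lambda>\<omega>. ?f \<omega> k) \<in> measurable (vimage_algebra (space M) ?f ?P) borel"
    by (rule measurable_compose[OF _ measurable_component_singleton]) (use k in simp)
  then have "(\<lambda>\<omega>. ?f \<omega> k) -` B \<inter> space (vimage_algebra (space M) ?f ?P) \<in> sets (vimage_algebra (space M) ?f ?P)"
    by (rule measurable_sets) (use B in simp)
  moreover have "(\<lambda>\<omega>. ?f \<omega> k) = dither_var k" using k by (auto simp: dither_var_def)
  ultimately show ?thesis using B by simp
qed

lemma source_events_subset: "source_events z \<subseteq> events"
proof (cases z)
  case None
  then show ?thesis using indep_setD_ev1[OF \<nu>_G_indep] by (simp add: source_events_def)
next
  case (Some k)
  then show ?thesis using measurable_sets[OF dither_var_measurable[of k]] by (auto simp: source_events_Some)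
qed

lemma source_events_Pow: "\<Union>(source_events ` I) \<subseteq> Pow (space M)"
  using source_events_subset sets.sets_into_space by blast

lemma indep_dither_sources:
  assumes J: "finite J" "J \<noteq> {}" "J \<subseteq> Idx" and A: "\<And>k. k \<in> J \<Longrightarrow> A k \<in> source_events (Some k)"
  shows "prob (\<Inter>k\<in>J. A k) = (\<Prod>k\<in>J. prob (A k))"
proof -
  have "indep_sets (\<lambda>k. {dither_var k -` A \<inter> space M | A. A \<in> sets borel}) Idx"
    using \<nu>_indep unfolding indep_vars_def2 dither_var_def by simp
  then show ?thesis
    by (rule indep_setsD) (use J A in \<open>auto simp: source_events_Some\<close>)
qed

text \<open>All sources of randomness are mutually independent: the dithers among themselves by
  assumption, and the graph sequence from the whole dither array.\<close>
lemma indep_sources: "indep_sets source_events (insert None (Some ` Idx))"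
proof (rule indep_setsI)
  show "source_events i \<subseteq> events" for i by (rule source_events_subset)
next
  fix A J assume J: "J \<noteq> {}" "J \<subseteq> insert None (Some ` Idx)" "finite J"
    and A: "\<forall>j\<in>J. A j \<in> source_events j"
  define J' where "J' = {k. Some k \<in> J}"
  have J_split: "J - {None} = Some ` J'" unfolding J'_def by (rule option_set_minus_None)
  have fin: "finite J'" unfolding J'_def
    using finite_vimageI[OF J(3), of Some] by (simp add: vimage_def)
  have J'_Idx: "J' \<subseteq> Idx" using J(2) unfolding J'_def by auto
  have A': "\<And>k. k \<in> J' \<Longrightarrow> A (Some k) \<in> source_events (Some k)" using A unfolding J'_def by auto
  show "prob (\<Inter>j\<in>J. A j) = (\<Prod>j\<in>J. prob (A j))"
  proof (cases "None \<in> J")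
    case False
    then have "J - {None} = J" by blast
    then have JJ: "J = Some ` J'" using J_split by metis
    then have "J' \<noteq> {}" using J by auto
    then have "prob (\<Inter>k\<in>J'. A (Some k)) = (\<Prod>k\<in>J'. prob (A (Some k)))"
      by (intro indep_dither_sources fin J'_Idx A') auto
    then show ?thesis unfolding JJ by (simp add: prod.reindex)
  next
    case True
    then have JJ: "J = insert None (Some ` J')" using J_split insert_Diff[OF True] by metis
    show ?thesis
    proof (cases "J' = {}")
      case True
      then show ?thesis unfolding JJ by simp
    next
      case False
      have dither_part: "(\<Inter>k\<in>J'. A (Some k)) \<in> dither_events"
        by (rule sets.finite_INT[OF fin False]) (use dither_source_in_dither_events A' J'_Idx in auto)
      have graph_part: "A None \<in> source_events None" using A True by auto
      have "prob (A None \<inter> (\<Inter>k\<in>J'. A (Some k))) = prob (A None) * prob (\<Inter>k\<in>J'. A (Some k))"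
        by (rule indep_setD[OF \<nu>_G_indep]) (use graph_part dither_part in \<open>auto simp: source_events_def\<close>)
      also have "prob (\<Inter>k\<in>J'. A (Some k)) = (\<Prod>k\<in>J'. prob (A (Some k)))"
        by (intro indep_dither_sources fin J'_Idx A' False)
      finally show ?thesis unfolding JJ using fin by (simp add: prod.reindex)
    qed
  qed
qed

definition past_sources :: "nat \<Rightarrow> (nat \<times> nat \<times> nat) option set" where
  "past_sources j = insert None (Some ` {k \<in> Idx. fst k < j})"

definition present_sources :: "nat \<Rightarrow> (nat \<times> nat \<times> nat) option set" where
  "present_sources j = Some ` step_indices j"

lemma indep_past_present:
  "indep_set (sigma_sets (space M) (\<Union>i\<in>past_sources j. source_events i))
             (sigma_sets (space M) (\<Union>i\<in>present_sources j. source_events i))"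
proof -
  let ?I = "\<lambda>b. if b then past_sources j else present_sources j"
  have "indep_sets (\<lambda>b. sigma_sets (space M) (\<Union>i\<in>?I b. source_events i)) UNIV"
  proof (rule indep_sets_collect_sigma)
    show "indep_sets source_events (\<Union>b\<in>UNIV. ?I b)"
      by (rule indep_sets_mono_index[OF _ indep_sources])
         (auto simp: past_sources_def present_sources_def step_indices_def)
    show "Int_stable (source_events i)" for i
      unfolding source_events_def by (cases i) (auto intro: sets.Int_stable)
    show "disjoint_family_on ?I UNIV"
      unfolding disjoint_family_on_def by (auto simp: past_sources_def present_sources_def step_indices_def)
  qed
  moreover have "(\<lambda>b. sigma_sets (space M) (\<Union>i\<in>?I b. source_events i))
    = case_bool (sigma_sets (space M) (\<Union>i\<in>past_sources j. source_events i))
                (sigma_sets (space M) (\<Union>i\<in>present_sources j. source_events i))"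
    by (rule ext) (simp split: bool.split)
  ultimately show ?thesis unfolding indep_set_def by simp
qed

lemma generated_subset_sources:
  assumes f: "f \<in> measurable (sigma (space M) (\<Union>i\<in>I. source_events i)) S"
  shows "sigma_sets (space M) {f -` A \<inter> space M | A. A \<in> sets S}
    \<subseteq> sigma_sets (space M) (\<Union>i\<in>I. source_events i)"
proof (rule sigma_sets_mono, safe)
  fix A assume "A \<in> sets S"
  from measurable_sets[OF f this] show "f -` A \<inter> space M \<in> sigma_sets (space M) (\<Union>i\<in>I. source_events i)"
    using source_events_Pow by (simp add: sets_measure_of space_measure_of)
qed

lemma measurable_from_source:
  assumes "z \<in> I" and pre: "\<And>A. A \<in> sets S \<Longrightarrow> f -` A \<inter> space M \<in> source_events z"
    and sp: "\<And>\<omega>. f \<omega> \<in> space S"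
  shows "f \<in> measurable (sigma (space M) (\<Union>i\<in>I. source_events i)) S"
proof (rule measurableI)
  show "f \<omega> \<in> space S" for \<omega> by (rule sp)
  fix A assume "A \<in> sets S"
  then have "f -` A \<inter> space M \<in> sigma_sets (space M) (\<Union>i\<in>I. source_events i)"
    using pre assms(1) by blast
  then show "f -` A \<inter> space (sigma (space M) (\<Union>i\<in>I. source_events i))
      \<in> sets (sigma (space M) (\<Union>i\<in>I. source_events i))"
    using source_events_Pow by (simp add: sets_measure_of space_measure_of)
qed

abbreviation "dither_block j \<equiv> PiM (step_indices j) (\<lambda>_. borel :: real measure)"

lemma history_measurable_past:
  "history j \<in> measurable (sigma (space M) (\<Union>i\<in>past_sources j. source_events i)) sample_space"
proof -
  let ?P = "sigma (space M) (\<Union>i\<in>past_sources j. source_events i)"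
  have "(\<lambda>\<omega>. \<lambda>i. G i \<omega>) \<in> measurable ?P (PiM UNIV (\<lambda>_. count_space UNIV))"
    by (rule measurable_PiM_single'[OF measurable_from_source[where z=None]])
       (auto simp: past_sources_def graph_event_source)
  moreover have "(\<lambda>\<omega>. \<lambda>k. (\<lambda>(i, n, l). if i < j \<and> n < N \<and> l < N then \<nu> i n l \<omega> else 0) k)
      \<in> measurable ?P (PiM UNIV (\<lambda>_. borel))"
  proof (rule measurable_PiM_single')
    fix k :: "nat \<times> nat \<times> nat"
    obtain i n l where k: "k = (i, n, l)" by (cases k) auto
    show "(\<lambda>\<omega>. (\<lambda>(i, n, l). if i < j \<and> n < N \<and> l < N then \<nu> i n l \<omega> else 0) k) \<in> borel_measurable ?P"
    proof (cases "i < j \<and> n < N \<and> l < N")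
      case True
      have "dither_var k \<in> borel_measurable ?P"
        by (rule measurable_from_source[where z="Some k"])
           (use True in \<open>auto simp: past_sources_def source_events_Some k\<close>)
      then show ?thesis using True by (simp add: k dither_var_def)
    qed (auto simp: k)
  qed auto
  ultimately show ?thesis unfolding history_def[abs_def] sample_space_def by (intro measurable_Pair) auto
qed

lemma fresh_dither_measurable_present:
  "fresh_dither j \<in> measurable (sigma (space M) (\<Union>i\<in>present_sources j. source_events i)) (dither_block j)"
  unfolding fresh_dither_def[abs_def]
proof (rule measurable_restrict)
  fix k assume "k \<in> step_indices j"
  then show "(\<lambda>\<omega>. dither_var k \<omega>) \<in> borel_measurable (sigma (space M) (\<Union>i\<in>present_sources j. source_events i))"
    by (intro measurable_from_source[where z="Some k"]) (auto simp: present_sources_def source_events_Some)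
qed

lemma fresh_dither_measurable: "fresh_dither j \<in> measurable M (dither_block j)"
  unfolding fresh_dither_def[abs_def] by (rule measurable_restrict) (use dither_var_measurable in auto)

lemma indep_history_fresh_dither:
  "indep_set (sigma_sets (space M) {history j -` A \<inter> space M | A. A \<in> sets sample_space})
             (sigma_sets (space M) {fresh_dither j -` A \<inter> space M | A. A \<in> sets (dither_block j)})"
  by (rule indep_set_mono[OF indep_past_present
        generated_subset_sources[OF history_measurable_past]
        generated_subset_sources[OF fresh_dither_measurable_present]])

lemma distr_fresh_dither: "distr M (dither_block j) (fresh_dither j) = PiM (step_indices j) (\<lambda>_. dither_law D)"
proof -
  have "(j, 0, 0) \<in> step_indices j" using N by (simp add: step_indices_def)
  then have ne: "step_indices j \<noteq> {}" by blast
  have ind: "indep_vars (\<lambda>_. borel) dither_var (step_indices j)"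
    by (rule indep_vars_subset[OF \<nu>_indep[folded dither_var_def]]) (auto simp: step_indices_def)
  have "distr M (dither_block j) (fresh_dither j) = (\<Pi>\<^sub>M k\<in>step_indices j. distr M borel (dither_var k))"
    using ind unfolding fresh_dither_def[abs_def]
    by (subst (asm) indep_vars_iff_distr_eq_PiM[OF ne dither_var_measurable])
  also have "\<dots> = PiM (step_indices j) (\<lambda>_. dither_law D)"
  proof (rule PiM_cong[OF refl])
    fix k assume "k \<in> step_indices j"
    then obtain n l where k: "k = (j, n, l)" "n < N" "l < N" by (auto simp: step_indices_def)
    have "distr M borel (dither_var k) = distr M lborel (dither_var k)"
      by (rule distr_cong) auto
    also have "\<dots> = dither_law D" using \<nu>_unif[OF k(2,3)] by (simp add: k dither_var_def dither_law_def)
    finally show "distr M borel (dither_var k) = dither_law D" .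
  qed
  finally show ?thesis .
qed

abbreviation "dither_prod j \<equiv> PiM (step_indices j) (\<lambda>_. dither_law D)"
abbreviation "history_law j \<equiv> distr M sample_space (history j)"

lemma integral_history_fresh_dither:
  fixes F :: "sample \<times> (nat \<times> nat \<times> nat \<Rightarrow> real) \<Rightarrow> real"
  assumes F: "F \<in> borel_measurable (sample_space \<Otimes>\<^sub>M dither_block j)"
    and int: "integrable M (\<lambda>\<omega>. F (history j \<omega>, fresh_dither j \<omega>))"
  shows "integrable (history_law j) (\<lambda>p. \<integral>v. F (p, v) \<partial>dither_prod j)"
    and "(\<integral>\<omega>. F (history j \<omega>, fresh_dither j \<omega>) \<partial>M) = (\<integral>p. (\<integral>v. F (p, v) \<partial>dither_prod j) \<partial>history_law j)"
proof -
  interpret PX: prob_space "history_law j" by (rule prob_space_distr[OF history_measurable])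
  interpret PS: product_prob_space "\<lambda>_. dither_law D" by (rule product_prob_space_dither[OF D])
  interpret PV: prob_space "dither_prod j" by (rule prob_space_PiM[OF prob_space_dither_law[OF D]])
  interpret PP: pair_sigma_finite "history_law j" "dither_prod j" ..
  have XV: "(\<lambda>\<omega>. (history j \<omega>, fresh_dither j \<omega>)) \<in> measurable M (sample_space \<Otimes>\<^sub>M dither_block j)"
    by (intro measurable_Pair history_measurable fresh_dither_measurable)
  have joint: "history_law j \<Otimes>\<^sub>M dither_prod j
      = distr M (sample_space \<Otimes>\<^sub>M dither_block j) (\<lambda>\<omega>. (history j \<omega>, fresh_dither j \<omega>))"
    using joint_distr_indep_set[OF history_measurable fresh_dither_measurable indep_history_fresh_dither]
      distr_fresh_dither by simp
  have int_prod: "integrable (history_law j \<Otimes>\<^sub>M dither_prod j) F"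
    unfolding joint using int by (subst integrable_distr_eq[OF XV F])
  show "integrable (history_law j) (\<lambda>p. \<integral>v. F (p, v) \<partial>dither_prod j)"
    by (rule PP.integrable_fst'[OF int_prod])
  have "(\<integral>\<omega>. F (history j \<omega>, fresh_dither j \<omega>) \<partial>M)
      = integral\<^sup>L (distr M (sample_space \<Otimes>\<^sub>M dither_block j) (\<lambda>\<omega>. (history j \<omega>, fresh_dither j \<omega>))) F"
    by (rule integral_distr[OF XV F, symmetric])
  also have "\<dots> = (\<integral>p. (\<integral>v. F (p, v) \<partial>dither_prod j) \<partial>history_law j)"
    unfolding joint[symmetric] by (rule PP.integral_fst'[OF int_prod, symmetric])
  finally show "(\<integral>\<omega>. F (history j \<omega>, fresh_dither j \<omega>) \<partial>M)
      = (\<integral>p. (\<integral>v. F (p, v) \<partial>dither_prod j) \<partial>history_law j)" .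
qed

subsection \<open>Boundedness of the iterates\<close>

text \<open>Outcomes in the sample space whose dithers all lie in [-D/2, D/2]; almost every
  outcome is typical, and on typical outcomes all quantities below are bounded.\<close>
definition typical :: "'w \<Rightarrow> bool" where
  "typical \<omega> \<longleftrightarrow> \<omega> \<in> space M \<and> (\<forall>i n l. n < N \<longrightarrow> l < N \<longrightarrow> \<bar>\<nu> i n l \<omega>\<bar> \<le> D/2)"

lemma AE_typical: "AE \<omega> in M. typical \<omega>"
proof -
  have "AE \<omega> in M. n < N \<longrightarrow> l < N \<longrightarrow> \<bar>\<nu> i n l \<omega>\<bar> \<le> D/2" for i n l
  proof (cases "n < N \<and> l < N")
    case True
    have "AE t in distr M lborel (\<nu> i n l). \<bar>t\<bar> \<le> D/2"
      unfolding \<nu>_unif[OF True[THEN conjunct1] True[THEN conjunct2], folded dither_law_def]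
      using AE_dither_law_range[OF D] by eventually_elim auto
    then have "AE \<omega> in M. \<bar>\<nu> i n l \<omega>\<bar> \<le> D/2"
      by (rule AE_distrD[rotated]) (use \<nu>_meas in simp)
    then show ?thesis by auto
  qed auto
  then have "AE \<omega> in M. \<forall>i n l. n < N \<longrightarrow> l < N \<longrightarrow> \<bar>\<nu> i n l \<omega>\<bar> \<le> D/2"
    by (simp add: AE_all_countable)
  then show ?thesis unfolding typical_def by (auto elim: AE_mp intro: AE_space)
qed

lemma integrable_if_typically_bounded:
  fixes f :: "'w \<Rightarrow> real"
  shows "f \<in> borel_measurable M \<Longrightarrow> (\<And>\<omega>. typical \<omega> \<Longrightarrow> \<bar>f \<omega>\<bar> \<le> B) \<Longrightarrow> integrable M f"
  by (rule integrable_const_bound[where B=B]) (use AE_typical in \<open>auto elim: AE_mp\<close>)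

primrec state_bound :: "nat \<Rightarrow> real" where
  "state_bound 0 = (\<Sum>n<N. \<bar>x0 n\<bar>)"
| "state_bound (Suc i) = (1 + \<alpha> i * N) * state_bound i + \<alpha> i * N * (state_bound i + D)"

lemma state_bound_nonneg: "0 \<le> state_bound i"
  by (induction i) (use less_imp_le[OF \<alpha>_pos] D in \<open>auto intro!: add_nonneg_nonneg mult_nonneg_nonneg\<close>)

lemma received_sum_bound:
  assumes t: "typical \<omega>" and n: "n < N" and IH: "\<And>l. l < N \<Longrightarrow> \<bar>x i \<omega> l\<bar> \<le> state_bound i"
  shows "\<bar>\<Sum>l<N. of_bool ((n, l) \<in> G i \<omega>) * quant D (x i \<omega> l + \<nu> i n l \<omega>)\<bar> \<le> N * (state_bound i + D)"
proof -
  have "\<bar>\<Sum>l<N. of_bool ((n, l) \<in> G i \<omega>) * quant D (x i \<omega> l + \<nu> i n l \<omega>)\<bar>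
      \<le> (\<Sum>l<N. \<bar>of_bool ((n, l) \<in> G i \<omega>) * quant D (x i \<omega> l + \<nu> i n l \<omega>)\<bar>)"
    by (rule sum_abs)
  also have "\<dots> \<le> (\<Sum>l<N. state_bound i + D)"
  proof (rule sum_mono)
    fix l assume l: "l \<in> {..<N}"
    have "\<bar>quant D (x i \<omega> l + \<nu> i n l \<omega>)\<bar> \<le> \<bar>x i \<omega> l + \<nu> i n l \<omega>\<bar> + D/2"
      using quant_error_bound[OF D, of "x i \<omega> l + \<nu> i n l \<omega>"] by linarith
    also have "\<dots> \<le> state_bound i + D"
    proof -
      have "\<bar>\<nu> i n l \<omega>\<bar> \<le> D/2" using t n l unfolding typical_def by auto
      moreover have "\<bar>x i \<omega> l\<bar> \<le> state_bound i" using IH l by auto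
      ultimately show ?thesis by linarith
    qed
    finally show "\<bar>of_bool ((n, l) \<in> G i \<omega>) * quant D (x i \<omega> l + \<nu> i n l \<omega>)\<bar> \<le> state_bound i + D"
      using state_bound_nonneg[of i] D by auto
  qed
  finally show ?thesis by simp
qed

lemma state_abs_bound: "typical \<omega> \<Longrightarrow> n < N \<Longrightarrow> \<bar>x i \<omega> n\<bar> \<le> state_bound i"
proof (induction i arbitrary: n)
  case 0
  then show ?case using member_le_sum[of n "{..<N}" "\<lambda>n. \<bar>x0 n\<bar>"] by simp
next
  case (Suc i)
  have s: "simple_graph_on N (G i \<omega>)" using simple Suc.prems unfolding typical_def by simp
  define c where "c = (\<Sum>l<N. of_bool ((n, l) \<in> G i \<omega>) :: real)"
  have c: "0 \<le> c" "c \<le> N" unfolding c_def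
    using sum_mono[of "{..<N}" "\<lambda>l. of_bool ((n, l) \<in> G i \<omega>) :: real" "\<lambda>_. 1"]
    by (auto intro: sum_nonneg)
  have step: "x (Suc i) \<omega> n = (1 - \<alpha> i * c) * x i \<omega> n
      + \<alpha> i * (\<Sum>l<N. of_bool ((n, l) \<in> G i \<omega>) * quant D (x i \<omega> l + \<nu> i n l \<omega>))"
    by (simp add: card_nbrs[OF s] sum_nbrs[OF s] c_def)
  have own: "\<bar>(1 - \<alpha> i * c) * x i \<omega> n\<bar> \<le> (1 + \<alpha> i * N) * state_bound i"
  proof -
    have "\<alpha> i * c \<le> \<alpha> i * N" "0 \<le> \<alpha> i * c"
      using mult_left_mono[OF c(2), of "\<alpha> i"] c \<alpha>_pos[of i] by simp_all
    then have "\<bar>1 - \<alpha> i * c\<bar> \<le> 1 + \<alpha> i * N" unfolding abs_le_iff by linarith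
    then show ?thesis unfolding abs_mult
      by (rule mult_mono) (use Suc less_imp_le[OF \<alpha>_pos[of i]] in \<open>auto intro: state_bound_nonneg\<close>)
  qed
  have received: "\<bar>\<Sum>l<N. of_bool ((n, l) \<in> G i \<omega>) * quant D (x i \<omega> l + \<nu> i n l \<omega>)\<bar>
      \<le> N * (state_bound i + D)"
    by (rule received_sum_bound) (use Suc in auto)
  have "\<bar>x (Suc i) \<omega> n\<bar> \<le> (1 + \<alpha> i * N) * state_bound i + \<alpha> i * (N * (state_bound i + D))"
    unfolding step using own mult_left_mono[OF received, of "\<alpha> i"] \<alpha>_pos[of i]
    by (auto simp: abs_mult intro!: order.trans[OF abs_triangle_ineq] add_mono)
  then show ?case by (simp add: algebra_simps)
qed

text \<open>A link error is at most one step D: half a step of quantization plus half a step of dither.\<close>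
lemma edge_error_bound: "typical \<omega> \<Longrightarrow> n < N \<Longrightarrow> l < N \<Longrightarrow> \<bar>edge_error j n l \<omega>\<bar> \<le> D"
proof -
  assume t: "typical \<omega>" and nl: "n < N" "l < N"
  have "\<bar>quant D (x j \<omega> l + \<nu> j n l \<omega>) - x j \<omega> l\<bar>
      \<le> \<bar>quant D (x j \<omega> l + \<nu> j n l \<omega>) - (x j \<omega> l + \<nu> j n l \<omega>)\<bar> + \<bar>\<nu> j n l \<omega>\<bar>" by linarith
  also have "\<dots> \<le> D/2 + D/2"
    using quant_error_bound[OF D] t nl unfolding typical_def by (intro add_mono) auto
  finally show ?thesis unfolding edge_error_def using D by auto
qed

lemma edge_error_measurable: "n < N \<Longrightarrow> l < N \<Longrightarrow> edge_error j n l \<in> borel_measurable M"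
proof -
  assume nl: "n < N" "l < N"
  have "(\<lambda>\<omega>. of_bool ((n, l) \<in> G j \<omega>) :: real) \<in> borel_measurable M"
    by (rule measurable_compose[OF graph_measurable]) simp
  then show ?thesis unfolding edge_error_def[abs_def]
    by (intro borel_measurable_times borel_measurable_diff measurable_compose[OF _ quant_measurable]
        borel_measurable_add state_measurable nl \<nu>_meas)
qed

lemma state_sum_measurable: "state_sum i \<in> borel_measurable M"
  unfolding state_sum_def[abs_def] by (intro borel_measurable_sum) (auto intro: state_measurable)

lemma state_sum_bound: "typical \<omega> \<Longrightarrow> \<bar>state_sum i \<omega>\<bar> \<le> N * state_bound i"
proof -
  assume t: "typical \<omega>"
  have "\<bar>state_sum i \<omega>\<bar> \<le> (\<Sum>n<N. \<bar>x i \<omega> n\<bar>)" unfolding state_sum_def by (rule sum_abs)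
  also have "\<dots> \<le> (\<Sum>n<N. state_bound i)" by (rule sum_mono) (use state_abs_bound[OF t] in auto)
  finally show ?thesis by simp
qed

lemma integrable_state_sum: "integrable M (state_sum i)"
  by (rule integrable_if_typically_bounded[OF state_sum_measurable state_sum_bound])

subsection \<open>Moments of the link errors\<close>

definition sample_edge_error :: "nat \<Rightarrow> nat \<Rightarrow> nat \<Rightarrow> sample \<times> (nat \<times> nat \<times> nat \<Rightarrow> real) \<Rightarrow> real" where
  "sample_edge_error j n l pv = of_bool ((n, l) \<in> fst (fst pv) j)
     * (quant D (path_state j (fst pv) l + snd pv (j, n, l)) - path_state j (fst pv) l)"

lemma sample_edge_error_measurable:
  "n < N \<Longrightarrow> l < N \<Longrightarrow> sample_edge_error j n l \<in> borel_measurable (sample_space \<Otimes>\<^sub>M dither_block j)"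
proof -
  assume nl: "n < N" "l < N"
  have "(\<lambda>pv. path_state j (fst pv) l) \<in> borel_measurable (sample_space \<Otimes>\<^sub>M dither_block j)"
    by (rule measurable_compose[OF measurable_fst qc_path_measurable])
  moreover have "(\<lambda>pv. of_bool ((n, l) \<in> fst (fst pv) j) :: real) \<in> borel_measurable (sample_space \<Otimes>\<^sub>M dither_block j)"
    by (rule measurable_compose[OF measurable_fst graph_functional_measurable])
  moreover have "(\<lambda>pv. snd pv (j, n, l)) \<in> borel_measurable (sample_space \<Otimes>\<^sub>M dither_block j)"
    by (rule measurable_compose[OF measurable_snd measurable_component_singleton])
       (use nl in \<open>simp add: step_indices_def\<close>)
  ultimately show ?thesis unfolding sample_edge_error_def[abs_def]
    by (intro borel_measurable_times borel_measurable_diff measurable_compose[OF _ quant_measurable]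
        borel_measurable_add)
qed

lemma sample_edge_error_eq:
  "\<omega> \<in> space M \<Longrightarrow> n < N \<Longrightarrow> l < N
    \<Longrightarrow> sample_edge_error j n l (history j \<omega>, fresh_dither j \<omega>) = edge_error j n l \<omega>"
  unfolding sample_edge_error_def edge_error_def using state_eq_path[of \<omega> j j l]
  by (simp add: fresh_dither_def step_indices_def dither_var_def) (simp add: history_def)

lemma integral_zero_if_dither_average_zero:
  fixes F :: "sample \<times> (nat \<times> nat \<times> nat \<Rightarrow> real) \<Rightarrow> real"
  assumes F: "F \<in> borel_measurable (sample_space \<Otimes>\<^sub>M dither_block j)"
    and g: "integrable M g"
    and eq: "\<And>\<omega>. \<omega> \<in> space M \<Longrightarrow> F (history j \<omega>, fresh_dither j \<omega>) = g \<omega>"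
    and avg: "\<And>p. (\<integral>v. F (p, v) \<partial>dither_prod j) = 0"
  shows "(\<integral>\<omega>. g \<omega> \<partial>M) = 0"
proof -
  have int_F: "integrable M (\<lambda>\<omega>. F (history j \<omega>, fresh_dither j \<omega>))"
    by (rule Bochner_Integration.integrable_cong[THEN iffD2, OF refl _ g]) (simp add: eq)
  have "(\<integral>\<omega>. g \<omega> \<partial>M) = (\<integral>\<omega>. F (history j \<omega>, fresh_dither j \<omega>) \<partial>M)"
    by (rule Bochner_Integration.integral_cong) (simp_all add: eq)
  also have "\<dots> = 0"
    by (simp add: integral_history_fresh_dither(2)[OF F int_F] avg)
  finally show ?thesis .
qed

text \<open>A typically bounded functional h of the history is uncorrelated with each link error:
  averaging over the fresh dither kills the error.\<close>
lemma integral_past_times_edge_error: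
  fixes h :: "sample \<Rightarrow> real"
  assumes h: "h \<in> borel_measurable sample_space" and hb: "\<And>\<omega>. typical \<omega> \<Longrightarrow> \<bar>h (history j \<omega>)\<bar> \<le> B"
    and nl: "n < N" "l < N"
  shows "integrable M (\<lambda>\<omega>. h (history j \<omega>) * edge_error j n l \<omega>)"
    and "(\<integral>\<omega>. h (history j \<omega>) * edge_error j n l \<omega> \<partial>M) = 0"
proof -
  show int: "integrable M (\<lambda>\<omega>. h (history j \<omega>) * edge_error j n l \<omega>)"
  proof (rule integrable_if_typically_bounded[where B="B * D"])
    show "(\<lambda>\<omega>. h (history j \<omega>) * edge_error j n l \<omega>) \<in> borel_measurable M"
      by (intro borel_measurable_times measurable_compose[OF history_measurable h] edge_error_measurable nl)
    fix \<omega> assume t: "typical \<omega>"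
    show "\<bar>h (history j \<omega>) * edge_error j n l \<omega>\<bar> \<le> B * D"
      unfolding abs_mult by (rule mult_mono) (use hb[OF t] edge_error_bound[OF t nl] in auto)
  qed
  define F where "F pv = h (fst pv) * sample_edge_error j n l pv" for pv
  have F_meas: "F \<in> borel_measurable (sample_space \<Otimes>\<^sub>M dither_block j)"
    unfolding F_def[abs_def]
    by (intro borel_measurable_times measurable_compose[OF measurable_fst h] sample_edge_error_measurable nl)
  have avg: "(\<integral>v. F (p, v) \<partial>dither_prod j) = 0" for p
  proof -
    have "(\<lambda>v. F (p, v)) = (\<lambda>v. (h p * of_bool ((n, l) \<in> fst p j))
        * (quant D (path_state j p l + v (j, n, l)) - path_state j p l))"
      by (auto simp: F_def sample_edge_error_def)
    then show ?thesis
      using integral_dither_product_component[OF D, of "(j, n, l)" "step_indices j"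
          "\<lambda>t. quant D (path_state j p l + t) - path_state j p l"]
        dithered_quant_error_mean(2)[OF D] nl
      by (simp add: step_indices_def)
  qed
  show "(\<integral>\<omega>. h (history j \<omega>) * edge_error j n l \<omega> \<partial>M) = 0"
    by (rule integral_zero_if_dither_average_zero[OF F_meas int _ avg])
       (simp add: F_def sample_edge_error_eq nl)
qed

text \<open>Errors on different links use independent dithers and are therefore uncorrelated.\<close>
lemma edge_errors_uncorrelated:
  assumes nl: "n1 < N" "l1 < N" "n2 < N" "l2 < N" "(n1, l1) \<noteq> (n2, l2)"
  shows "integrable M (\<lambda>\<omega>. edge_error j n1 l1 \<omega> * edge_error j n2 l2 \<omega>)"
    and "(\<integral>\<omega>. edge_error j n1 l1 \<omega> * edge_error j n2 l2 \<omega> \<partial>M) = 0"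
proof -
  show int: "integrable M (\<lambda>\<omega>. edge_error j n1 l1 \<omega> * edge_error j n2 l2 \<omega>)"
  proof (rule integrable_if_typically_bounded[where B="D * D"])
    show "(\<lambda>\<omega>. edge_error j n1 l1 \<omega> * edge_error j n2 l2 \<omega>) \<in> borel_measurable M"
      by (intro borel_measurable_times edge_error_measurable nl)
    fix \<omega> assume t: "typical \<omega>"
    show "\<bar>edge_error j n1 l1 \<omega> * edge_error j n2 l2 \<omega>\<bar> \<le> D * D"
      unfolding abs_mult by (rule mult_mono) (use edge_error_bound[OF t] nl less_imp_le[OF D] in auto)
  qed
  define F where "F pv = sample_edge_error j n1 l1 pv * sample_edge_error j n2 l2 pv" for pv
  have F_meas: "F \<in> borel_measurable (sample_space \<Otimes>\<^sub>M dither_block j)"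
    unfolding F_def[abs_def] by (intro borel_measurable_times sample_edge_error_measurable nl)
  have avg: "(\<integral>v. F (p, v) \<partial>dither_prod j) = 0" for p
  proof -
    define c1 where "c1 = path_state j p l1"
    define c2 where "c2 = path_state j p l2"
    define a where "a = of_bool ((n1, l1) \<in> fst p j) * (of_bool ((n2, l2) \<in> fst p j) :: real)"
    have "(\<lambda>v. F (p, v)) = (\<lambda>v. a * ((quant D (c1 + v (j, n1, l1)) - c1) * (quant D (c2 + v (j, n2, l2)) - c2)))"
      by (auto simp: F_def sample_edge_error_def a_def c1_def c2_def)
    moreover have "(\<integral>v. (quant D (c1 + v (j, n1, l1)) - c1) * (quant D (c2 + v (j, n2, l2)) - c2) \<partial>dither_prod j)
        = (\<integral>t. quant D (c1 + t) - c1 \<partial>dither_law D) * (\<integral>t. quant D (c2 + t) - c2 \<partial>dither_law D)"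
      by (rule integral_dither_product_pair[OF D _ _ _ _
            dithered_quant_error_mean(1)[OF D] dithered_quant_error_mean(1)[OF D]])
         (use nl in \<open>auto simp: step_indices_def\<close>)
    ultimately show ?thesis using dithered_quant_error_mean(2)[OF D] by simp
  qed
  show "(\<integral>\<omega>. edge_error j n1 l1 \<omega> * edge_error j n2 l2 \<omega> \<partial>M) = 0"
    by (rule integral_zero_if_dither_average_zero[OF F_meas int _ avg])
       (simp add: F_def sample_edge_error_eq nl)
qed

lemma integrable_edge_error_sq: "n < N \<Longrightarrow> l < N \<Longrightarrow> integrable M (\<lambda>\<omega>. (edge_error j n l \<omega>)\<^sup>2)"
proof (rule integrable_if_typically_bounded[where B="D * D"])
  assume nl: "n < N" "l < N"
  then show "(\<lambda>\<omega>. (edge_error j n l \<omega>)\<^sup>2) \<in> borel_measurable M"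
    by (intro borel_measurable_power edge_error_measurable)
  fix \<omega> assume t: "typical \<omega>"
  have b: "\<bar>edge_error j n l \<omega>\<bar> \<le> D" using edge_error_bound[OF t nl] .
  have "\<bar>edge_error j n l \<omega>\<bar> * \<bar>edge_error j n l \<omega>\<bar> \<le> D * D"
    by (rule mult_mono[OF b b]) (use D in auto)
  then show "\<bar>(edge_error j n l \<omega>)\<^sup>2\<bar> \<le> D * D" by (simp add: power2_eq_square abs_mult)
qed

text \<open>The second moment of a link error is at most D^2/4 times the probability of the link:
  given the history, the error is a dithered quantization error if the link is present
  and zero otherwise.\<close>
lemma edge_error_second_moment:
  assumes nl: "n < N" "l < N"
  shows "(\<integral>\<omega>. (edge_error j n l \<omega>)\<^sup>2 \<partial>M) \<le> D\<^sup>2 / 4 * (\<integral>\<omega>. of_bool ((n, l) \<in> G j \<omega>) \<partial>M)"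
proof -
  interpret PX: prob_space "history_law j" by (rule prob_space_distr[OF history_measurable])
  define F where "F pv = (sample_edge_error j n l pv)\<^sup>2" for pv
  have F_meas: "F \<in> borel_measurable (sample_space \<Otimes>\<^sub>M dither_block j)"
    unfolding F_def[abs_def] by (intro borel_measurable_power sample_edge_error_measurable nl)
  have F_eq: "\<omega> \<in> space M \<Longrightarrow> F (history j \<omega>, fresh_dither j \<omega>) = (edge_error j n l \<omega>)\<^sup>2" for \<omega>
    unfolding F_def using sample_edge_error_eq nl by simp
  have int_F: "integrable M (\<lambda>\<omega>. F (history j \<omega>, fresh_dither j \<omega>))"
    by (rule Bochner_Integration.integrable_cong[THEN iffD2, OF refl _ integrable_edge_error_sq[OF nl]])
       (simp add: F_eq)
  define link :: "sample \<Rightarrow> real" where "link p = of_bool ((n, l) \<in> fst p j)" for p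
  have link_meas: "link \<in> borel_measurable sample_space"
    unfolding link_def[abs_def] by (rule graph_functional_measurable)
  have avg: "(\<integral>v. F (p, v) \<partial>dither_prod j) \<le> link p * (D\<^sup>2 / 4)" for p
  proof -
    define c where "c = path_state j p l"
    have "(\<lambda>v. F (p, v)) = (\<lambda>v. link p * (quant D (c + v (j, n, l)) - c)\<^sup>2)"
      by (auto simp: F_def sample_edge_error_def link_def c_def power2_eq_square)
    then have "(\<integral>v. F (p, v) \<partial>dither_prod j) = link p * (\<integral>t. (quant D (c + t) - c)\<^sup>2 \<partial>dither_law D)"
      using integral_dither_product_component[OF D, of "(j, n, l)" "step_indices j" "\<lambda>t. (quant D (c + t) - c)\<^sup>2"] nl
      by (simp add: step_indices_def)
    also have "\<dots> \<le> link p * (D\<^sup>2 / 4)"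
      by (rule mult_left_mono[OF dithered_quant_error_second_moment[OF D]]) (simp add: link_def)
    finally show ?thesis .
  qed
  have int_link: "integrable (history_law j) (\<lambda>p. link p * (D\<^sup>2 / 4))"
  proof (rule PX.integrable_const_bound[where B="D\<^sup>2/4"])
    show "AE p in history_law j. norm (link p * (D\<^sup>2 / 4)) \<le> D\<^sup>2 / 4" by (auto simp: link_def)
    show "(\<lambda>p. link p * (D\<^sup>2 / 4)) \<in> borel_measurable (history_law j)" using link_meas by simp
  qed
  have "(\<integral>\<omega>. (edge_error j n l \<omega>)\<^sup>2 \<partial>M) = (\<integral>\<omega>. F (history j \<omega>, fresh_dither j \<omega>) \<partial>M)"
    by (rule Bochner_Integration.integral_cong) (simp_all add: F_eq)
  also have "\<dots> = (\<integral>p. (\<integral>v. F (p, v) \<partial>dither_prod j) \<partial>history_law j)"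
    by (rule integral_history_fresh_dither(2)[OF F_meas int_F])
  also have "\<dots> \<le> (\<integral>p. link p * (D\<^sup>2 / 4) \<partial>history_law j)"
    by (rule integral_mono[OF integral_history_fresh_dither(1)[OF F_meas int_F] int_link avg])
  also have "\<dots> = (\<integral>\<omega>. link (history j \<omega>) * (D\<^sup>2 / 4) \<partial>M)"
    by (rule integral_distr[OF history_measurable]) (use link_meas in simp)
  also have "\<dots> = D\<^sup>2 / 4 * (\<integral>\<omega>. of_bool ((n, l) \<in> G j \<omega>) \<partial>M)"
    by (simp add: link_def history_def mult.commute)
  finally show ?thesis .
qed

lemma total_error_as_sum: "total_error j \<omega> = (\<Sum>k\<in>node_pairs. edge_error j (fst k) (snd k) \<omega>)"
  unfolding total_error_def by (simp add: split_beta)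

lemma integral_past_times_total_error:
  fixes h :: "sample \<Rightarrow> real"
  assumes h: "h \<in> borel_measurable sample_space" and hb: "\<And>\<omega>. typical \<omega> \<Longrightarrow> \<bar>h (history j \<omega>)\<bar> \<le> B"
  shows "integrable M (\<lambda>\<omega>. h (history j \<omega>) * total_error j \<omega>)"
    and "(\<integral>\<omega>. h (history j \<omega>) * total_error j \<omega> \<partial>M) = 0"
proof -
  have eq: "h (history j \<omega>) * total_error j \<omega>
      = (\<Sum>k\<in>node_pairs. h (history j \<omega>) * edge_error j (fst k) (snd k) \<omega>)" for \<omega>
    by (simp add: total_error_as_sum sum_distrib_left)
  have int: "k \<in> node_pairs \<Longrightarrow> integrable M (\<lambda>\<omega>. h (history j \<omega>) * edge_error j (fst k) (snd k) \<omega>)" for k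
    by (rule integral_past_times_edge_error(1)[OF h hb]) auto
  show "integrable M (\<lambda>\<omega>. h (history j \<omega>) * total_error j \<omega>)"
    unfolding eq by (rule Bochner_Integration.integrable_sum) (rule int)
  have "(\<integral>\<omega>. h (history j \<omega>) * total_error j \<omega> \<partial>M)
      = (\<Sum>k\<in>node_pairs. (\<integral>\<omega>. h (history j \<omega>) * edge_error j (fst k) (snd k) \<omega> \<partial>M))"
    unfolding eq by (rule Bochner_Integration.integral_sum) (rule int)
  also have "\<dots> = 0"
    by (rule sum.neutral) (use integral_past_times_edge_error(2)[OF h hb] in auto)
  finally show "(\<integral>\<omega>. h (history j \<omega>) * total_error j \<omega> \<partial>M) = 0" .
qed

lemma integrable_total_error: "integrable M (total_error j)"
  using integral_past_times_total_error(1)[of "\<lambda>_. 1" j 1] by simp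

lemma integral_total_error: "(\<integral>\<omega>. total_error j \<omega> \<partial>M) = 0"
  using integral_past_times_total_error(2)[of "\<lambda>_. 1" j 1] by simp

text \<open>Pythagoras for the uncorrelated link errors.\<close>
lemma total_error_second_moment_eq:
  shows "integrable M (\<lambda>\<omega>. (total_error j \<omega>)\<^sup>2)"
    and "(\<integral>\<omega>. (total_error j \<omega>)\<^sup>2 \<partial>M) = (\<Sum>k\<in>node_pairs. (\<integral>\<omega>. (edge_error j (fst k) (snd k) \<omega>)\<^sup>2 \<partial>M))"
proof -
  let ?w = "\<lambda>k \<omega>. edge_error j (fst k) (snd k) \<omega>"
  have eq: "(total_error j \<omega>)\<^sup>2 = (\<Sum>k1\<in>node_pairs. \<Sum>k2\<in>node_pairs. ?w k1 \<omega> * ?w k2 \<omega>)" for \<omega>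
    by (simp add: total_error_as_sum power2_eq_square sum_product)
  have int: "integrable M (\<lambda>\<omega>. ?w k1 \<omega> * ?w k2 \<omega>)"
    if "k1 \<in> node_pairs" "k2 \<in> node_pairs" for k1 k2
  proof (cases "k1 = k2")
    case True
    then show ?thesis
      using that integrable_edge_error_sq[of "fst k1" "snd k1" j] by (auto simp: power2_eq_square)
  next
    case False
    then show ?thesis
      using that edge_errors_uncorrelated(1)[of "fst k1" "snd k1" "fst k2" "snd k2" j] by (auto simp: prod_eq_iff)
  qed
  have cross: "(\<integral>\<omega>. ?w k1 \<omega> * ?w k2 \<omega> \<partial>M) = (if k2 = k1 then (\<integral>\<omega>. (?w k1 \<omega>)\<^sup>2 \<partial>M) else 0)"
    if "k1 \<in> node_pairs" "k2 \<in> node_pairs" for k1 k2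
    using that edge_errors_uncorrelated(2)[of "fst k1" "snd k1" "fst k2" "snd k2" j]
    by (auto simp: power2_eq_square prod_eq_iff)
  show "integrable M (\<lambda>\<omega>. (total_error j \<omega>)\<^sup>2)"
    unfolding eq by (intro Bochner_Integration.integrable_sum int)
  have "(\<integral>\<omega>. (total_error j \<omega>)\<^sup>2 \<partial>M)
      = (\<Sum>k1\<in>node_pairs. \<Sum>k2\<in>node_pairs. (\<integral>\<omega>. ?w k1 \<omega> * ?w k2 \<omega> \<partial>M))"
    unfolding eq
    by (subst Bochner_Integration.integral_sum, use int in \<open>auto intro!: Bochner_Integration.integrable_sum\<close>)
  also have "\<dots> = (\<Sum>k1\<in>node_pairs. (\<integral>\<omega>. (?w k1 \<omega>)\<^sup>2 \<partial>M))"
    by (rule sum.cong[OF refl]) (simp add: cross)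
  finally show "(\<integral>\<omega>. (total_error j \<omega>)\<^sup>2 \<partial>M) = (\<Sum>k\<in>node_pairs. (\<integral>\<omega>. (?w k \<omega>)\<^sup>2 \<partial>M))" .
qed

abbreviation "realizable \<equiv> realizable_edges M N (G 0)"

text \<open>By stationarity, the probability that a link is present does not depend on time.\<close>
lemma integral_link_indicator: "(\<integral>\<omega>. of_bool (k \<in> G j \<omega>) \<partial>M) = prob {\<omega> \<in> space M. k \<in> G 0 \<omega>}"
proof -
  have "(\<integral>\<omega>. of_bool (k \<in> G j \<omega>) \<partial>M) = (\<integral>\<omega>. indicator {\<omega> \<in> space M. k \<in> G j \<omega>} \<omega> \<partial>M)"
    by (rule Bochner_Integration.integral_cong) (auto simp: indicator_def)
  also have "\<dots> = prob {\<omega> \<in> space M. k \<in> G j \<omega>}"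
    by (simp add: Int_absorb2 subset_eq)
  also have "\<dots> = measure (distr M (count_space UNIV) (G j)) {g. k \<in> g}"
    by (subst measure_distr[OF graph_measurable]) (auto intro!: arg_cong[where f=prob])
  also have "\<dots> = measure (distr M (count_space UNIV) (G 0)) {g. k \<in> g}"
    by (simp add: G_ident[of j])
  also have "\<dots> = prob {\<omega> \<in> space M. k \<in> G 0 \<omega>}"
    by (subst measure_distr[OF graph_measurable]) (auto intro!: arg_cong[where f=prob])
  finally show ?thesis .
qed

lemma link_prob_le_realizable:
  shows "prob {\<omega> \<in> space M. (n, l) \<in> G 0 \<omega>} \<le> of_bool ((n, l) \<in> realizable) + of_bool ((l, n) \<in> realizable)"
proof -
  have symm: "{\<omega> \<in> space M. (n, l) \<in> G 0 \<omega>} = {\<omega> \<in> space M. (l, n) \<in> G 0 \<omega>}"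
    using simple unfolding simple_graph_on_def by blast
  have in_range: "{\<omega> \<in> space M. (n, l) \<in> G 0 \<omega>} = {}" if "\<not> (n < N \<and> l < N \<and> n \<noteq> l)"
    using simple that unfolding simple_graph_on_def by blast
  consider "n < l" "l < N" | "l < n" "n < N" | "\<not> (n < N \<and> l < N \<and> n \<noteq> l)" by linarith
  then show ?thesis
  proof cases
    case 1
    then show ?thesis
      by (cases "(n, l) \<in> realizable") (auto simp: realizable_edges_def add_increasing2)
  next
    case 2
    then show ?thesis
      by (cases "(l, n) \<in> realizable") (auto simp: realizable_edges_def symm add_increasing)
  qed (simp add: in_range)
qed

lemma expected_link_count_le:
  "(\<Sum>k\<in>node_pairs. (\<integral>\<omega>. of_bool (k \<in> G j \<omega>) \<partial>M)) \<le> 2 * real (card realizable)"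
proof -
  have "(\<Sum>k\<in>node_pairs. (\<integral>\<omega>. of_bool (k \<in> G j \<omega>) \<partial>M))
      \<le> (\<Sum>k\<in>node_pairs. of_bool (k \<in> realizable) + of_bool (prod.swap k \<in> realizable) :: real)"
  proof (rule sum_mono)
    fix k :: "nat \<times> nat"
    show "(\<integral>\<omega>. of_bool (k \<in> G j \<omega>) \<partial>M)
        \<le> (of_bool (k \<in> realizable) + of_bool (prod.swap k \<in> realizable) :: real)"
      unfolding integral_link_indicator using link_prob_le_realizable[of "fst k" "snd k"] by (cases k) simp
  qed
  also have "\<dots> = (\<Sum>k\<in>node_pairs. of_bool (k \<in> realizable)) + (\<Sum>k\<in>node_pairs. of_bool (prod.swap k \<in> realizable))"
    by (rule sum.distrib)
  also have "(\<Sum>k\<in>node_pairs. of_bool (prod.swap k \<in> realizable)) = (\<Sum>k\<in>node_pairs. (of_bool (k \<in> realizable) :: real))"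
  proof -
    have "(\<Sum>k\<in>node_pairs. (of_bool (prod.swap k \<in> realizable) :: real))
        = (\<Sum>k\<in>prod.swap ` node_pairs. of_bool (k \<in> realizable))"
      by (subst sum.reindex) (auto intro: inj_onI)
    also have "prod.swap ` node_pairs = node_pairs" by auto
    finally show ?thesis .
  qed
  also have "(\<Sum>k\<in>node_pairs. (of_bool (k \<in> realizable) :: real)) = real (card realizable)"
    using realizable_edges_def[of M N "G 0"] by (simp add: Int_absorb1 subset_eq)
  finally show ?thesis by simp
qed

abbreviation "err_rate \<equiv> D\<^sup>2 / 2 * real (card realizable)"

text \<open>Combining the link bounds: E[e(j)^2] <= D^2/4 * 2 |M|.\<close>
lemma total_error_second_moment: "(\<integral>\<omega>. (total_error j \<omega>)\<^sup>2 \<partial>M) \<le> err_rate"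
proof -
  have "(\<integral>\<omega>. (total_error j \<omega>)\<^sup>2 \<partial>M) \<le> (\<Sum>k\<in>node_pairs. D\<^sup>2 / 4 * (\<integral>\<omega>. of_bool (k \<in> G j \<omega>) \<partial>M))"
    unfolding total_error_second_moment_eq(2) by (rule sum_mono) (use edge_error_second_moment in auto)
  also have "\<dots> \<le> D\<^sup>2 / 4 * (2 * real (card realizable))"
    unfolding sum_distrib_left[symmetric] by (rule mult_left_mono[OF expected_link_count_le]) simp
  finally show ?thesis by simp
qed

text \<open>The state sum is a martingale; in particular its mean is the initial sum.\<close>
lemma integral_state_sum: "(\<integral>\<omega>. state_sum i \<omega> \<partial>M) = (\<Sum>n<N. x0 n)"
proof (induction i)
  case 0
  then show ?case by (simp add: state_sum_def prob_space)
next
  case (Suc i)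
  have "(\<integral>\<omega>. state_sum (Suc i) \<omega> \<partial>M) = (\<integral>\<omega>. state_sum i \<omega> + \<alpha> i * total_error i \<omega> \<partial>M)"
    by (rule Bochner_Integration.integral_cong) (simp_all add: state_sum_step)
  also have "\<dots> = (\<integral>\<omega>. state_sum i \<omega> \<partial>M) + \<alpha> i * (\<integral>\<omega>. total_error i \<omega> \<partial>M)"
    using integrable_state_sum integrable_total_error by simp
  finally show ?case using Suc integral_total_error by simp
qed

definition sample_increment :: "nat \<Rightarrow> nat \<Rightarrow> sample \<Rightarrow> real" where
  "sample_increment i k p = (\<Sum>n<N. path_state i p n) - (\<Sum>n<N. path_state k p n)"

lemma sample_increment_measurable: "sample_increment i k \<in> borel_measurable sample_space"
  unfolding sample_increment_def[abs_def] by (intro borel_measurable_diff borel_measurable_sum qc_path_measurable)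

lemma sample_increment_eq:
  "\<omega> \<in> space M \<Longrightarrow> k \<le> i \<Longrightarrow> sample_increment i k (history i \<omega>) = state_sum i \<omega> - state_sum k \<omega>"
  unfolding sample_increment_def state_sum_def by (simp add: state_eq_path)

lemma increment_bound:
  "typical \<omega> \<Longrightarrow> \<bar>state_sum i \<omega> - state_sum k \<omega>\<bar> \<le> N * state_bound i + N * state_bound k"
  using state_sum_bound[of \<omega> i] state_sum_bound[of \<omega> k] by linarith

lemma integrable_increment_sq: "integrable M (\<lambda>\<omega>. (state_sum i \<omega> - state_sum k \<omega>)\<^sup>2)"
proof (rule integrable_if_typically_bounded[where B="(N * state_bound i + N * state_bound k)\<^sup>2"])
  show "(\<lambda>\<omega>. (state_sum i \<omega> - state_sum k \<omega>)\<^sup>2) \<in> borel_measurable M"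
    by (intro borel_measurable_power borel_measurable_diff state_sum_measurable)
  fix \<omega> assume "typical \<omega>"
  then have "\<bar>state_sum i \<omega> - state_sum k \<omega>\<bar>\<^sup>2 \<le> (N * state_bound i + N * state_bound k)\<^sup>2"
    by (intro power_mono increment_bound) simp_all
  then show "\<bar>(state_sum i \<omega> - state_sum k \<omega>)\<^sup>2\<bar> \<le> (N * state_bound i + N * state_bound k)\<^sup>2" by simp
qed

text \<open>One step adds at most alpha(i)^2 times the error rate to the second moment of the
  increment: the cross term vanishes because the error is uncorrelated with the past.\<close>
lemma increment_second_moment_step:
  assumes ki: "k \<le> i"
  shows "(\<integral>\<omega>. (state_sum (Suc i) \<omega> - state_sum k \<omega>)\<^sup>2 \<partial>M)
    \<le> (\<integral>\<omega>. (state_sum i \<omega> - state_sum k \<omega>)\<^sup>2 \<partial>M) + (\<alpha> i)\<^sup>2 * err_rate"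
proof -
  let ?h = "sample_increment i k"
  have hb: "\<bar>?h (history i \<omega>)\<bar> \<le> N * state_bound i + N * state_bound k" if t: "typical \<omega>" for \<omega>
    using sample_increment_eq[OF _ ki, of \<omega>] increment_bound[OF t] t unfolding typical_def by simp
  have eq: "(state_sum (Suc i) \<omega> - state_sum k \<omega>)\<^sup>2 = (state_sum i \<omega> - state_sum k \<omega>)\<^sup>2
      + 2 * \<alpha> i * (?h (history i \<omega>) * total_error i \<omega>) + (\<alpha> i)\<^sup>2 * (total_error i \<omega>)\<^sup>2"
    if "\<omega> \<in> space M" for \<omega>
    using that by (simp add: state_sum_step sample_increment_eq[OF _ ki] power2_eq_square algebra_simps)
  have "(\<integral>\<omega>. (state_sum (Suc i) \<omega> - state_sum k \<omega>)\<^sup>2 \<partial>M)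
      = (\<integral>\<omega>. (state_sum i \<omega> - state_sum k \<omega>)\<^sup>2 + 2 * \<alpha> i * (?h (history i \<omega>) * total_error i \<omega>)
          + (\<alpha> i)\<^sup>2 * (total_error i \<omega>)\<^sup>2 \<partial>M)"
    by (rule Bochner_Integration.integral_cong) (simp_all add: eq)
  also have "\<dots> = (\<integral>\<omega>. (state_sum i \<omega> - state_sum k \<omega>)\<^sup>2 \<partial>M)
      + 2 * \<alpha> i * (\<integral>\<omega>. ?h (history i \<omega>) * total_error i \<omega> \<partial>M)
      + (\<alpha> i)\<^sup>2 * (\<integral>\<omega>. (total_error i \<omega>)\<^sup>2 \<partial>M)"
    using integrable_increment_sq integral_past_times_total_error(1)[OF sample_increment_measurable hb]
      total_error_second_moment_eq(1) by simp
  also have "(\<integral>\<omega>. ?h (history i \<omega>) * total_error i \<omega> \<partial>M) = 0"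
    by (rule integral_past_times_total_error(2)[OF sample_increment_measurable hb])
  also have "(\<alpha> i)\<^sup>2 * (\<integral>\<omega>. (total_error i \<omega>)\<^sup>2 \<partial>M) \<le> (\<alpha> i)\<^sup>2 * err_rate"
    by (rule mult_left_mono[OF total_error_second_moment]) simp
  finally show ?thesis by simp
qed

abbreviation "alpha_sq_sum \<equiv> (\<Sum>j. (\<alpha> j)\<^sup>2)"

lemma increment_second_moment:
  assumes "k \<le> i"
  shows "(\<integral>\<omega>. (state_sum i \<omega> - state_sum k \<omega>)\<^sup>2 \<partial>M) \<le> err_rate * (alpha_sq_sum - (\<Sum>j<k. (\<alpha> j)\<^sup>2))"
proof -
  have "(\<integral>\<omega>. (state_sum i \<omega> - state_sum k \<omega>)\<^sup>2 \<partial>M) \<le> err_rate * (\<Sum>j<i. (\<alpha> j)\<^sup>2) - err_rate * (\<Sum>j<k. (\<alpha> j)\<^sup>2)"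
    using assms
  proof (induction rule: dec_induct)
    case (step i)
    then show ?case using increment_second_moment_step[OF step(1)] by (simp add: algebra_simps)
  qed simp
  also have "\<dots> \<le> err_rate * alpha_sq_sum - err_rate * (\<Sum>j<k. (\<alpha> j)\<^sup>2)"
    using mult_left_mono[OF sum_le_suminf[OF \<alpha>_sq], of "{..<i}" err_rate] by simp
  finally show ?thesis by (simp add: algebra_simps)
qed

lemma state_sum_limit: "AE \<omega> in M. (\<lambda>i. state_sum i \<omega>) \<longlonglongrightarrow> N * \<theta> \<omega>"
  using \<theta>_lim
proof eventually_elim
  case (elim \<omega>)
  then have "(\<lambda>i. \<Sum>n<N. x i \<omega> n) \<longlonglongrightarrow> (\<Sum>n<N. \<theta> \<omega>)"
    by (intro tendsto_sum) auto
  then show ?case by (simp add: state_sum_def)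
qed

definition deviation :: "nat \<Rightarrow> 'w \<Rightarrow> real" where
  "deviation k \<omega> = N * \<theta> \<omega> - state_sum k \<omega>"

lemma deviation_measurable: "deviation k \<in> borel_measurable M"
  unfolding deviation_def[abs_def]
  by (intro borel_measurable_diff borel_measurable_times borel_measurable_const \<theta>_meas state_sum_measurable)

text \<open>Fatou's lemma passes the increment bound to the limit.\<close>
lemma deviation_second_moment_nn:
  "(\<integral>\<^sup>+\<omega>. ennreal ((deviation k \<omega>)\<^sup>2) \<partial>M) \<le> ennreal (err_rate * (alpha_sq_sum - (\<Sum>j<k. (\<alpha> j)\<^sup>2)))"
proof -
  define u where "u i \<omega> = ennreal ((state_sum i \<omega> - state_sum k \<omega>)\<^sup>2)" for i \<omega>
  have u_meas: "u i \<in> borel_measurable M" for i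
    unfolding u_def[abs_def]
    by (intro measurable_compose[OF _ measurable_ennreal] borel_measurable_power borel_measurable_diff
        state_sum_measurable)
  have "(\<integral>\<^sup>+\<omega>. ennreal ((deviation k \<omega>)\<^sup>2) \<partial>M) = (\<integral>\<^sup>+\<omega>. liminf (\<lambda>i. u i \<omega>) \<partial>M)"
  proof (rule nn_integral_cong_AE)
    show "AE \<omega> in M. ennreal ((deviation k \<omega>)\<^sup>2) = liminf (\<lambda>i. u i \<omega>)"
      using state_sum_limit
    proof eventually_elim
      case (elim \<omega>)
      then have "(\<lambda>i. u i \<omega>) \<longlonglongrightarrow> ennreal ((deviation k \<omega>)\<^sup>2)"
        unfolding u_def deviation_def by (intro tendsto_ennrealI tendsto_power tendsto_diff) auto
      then show ?case by (rule lim_imp_Liminf[symmetric, rotated]) simp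
    qed
  qed
  also have "\<dots> \<le> liminf (\<lambda>i. integral\<^sup>N M (u i))"
    by (rule nn_integral_liminf[OF u_meas])
  also have "\<dots> \<le> ennreal (err_rate * (alpha_sq_sum - (\<Sum>j<k. (\<alpha> j)\<^sup>2)))"
  proof (rule Liminf_le)
    show "\<forall>\<^sub>F i in sequentially. integral\<^sup>N M (u i) \<le> ennreal (err_rate * (alpha_sq_sum - (\<Sum>j<k. (\<alpha> j)\<^sup>2)))"
      unfolding eventually_sequentially
    proof (intro exI allI impI)
      fix i assume ki: "k \<le> i"
      have "integral\<^sup>N M (u i) = ennreal (\<integral>\<omega>. (state_sum i \<omega> - state_sum k \<omega>)\<^sup>2 \<partial>M)"
        unfolding u_def by (rule nn_integral_eq_integral[OF integrable_increment_sq]) simp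
      then show "integral\<^sup>N M (u i) \<le> ennreal (err_rate * (alpha_sq_sum - (\<Sum>j<k. (\<alpha> j)\<^sup>2)))"
        using increment_second_moment[OF ki] by (simp add: ennreal_leI)
    qed
  qed simp
  finally show ?thesis .
qed

lemma integrable_deviation_sq: "integrable M (\<lambda>\<omega>. (deviation k \<omega>)\<^sup>2)"
proof (rule integrableI_nonneg)
  show "(\<lambda>\<omega>. (deviation k \<omega>)\<^sup>2) \<in> borel_measurable M" by (intro borel_measurable_power deviation_measurable)
  show "(\<integral>\<^sup>+\<omega>. ennreal ((deviation k \<omega>)\<^sup>2) \<partial>M) < \<infinity>"
    using deviation_second_moment_nn[of k] by (simp add: order.strict_trans1)
qed simp

lemma integrable_deviation: "integrable M (deviation k)"
  by (rule square_integrable_imp_integrable[OF deviation_measurable integrable_deviation_sq])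

lemma deviation_second_moment:
  "(\<integral>\<omega>. (deviation k \<omega>)\<^sup>2 \<partial>M) \<le> err_rate * (alpha_sq_sum - (\<Sum>j<k. (\<alpha> j)\<^sup>2))"
proof -
  have "ennreal (\<integral>\<omega>. (deviation k \<omega>)\<^sup>2 \<partial>M) = (\<integral>\<^sup>+\<omega>. ennreal ((deviation k \<omega>)\<^sup>2) \<partial>M)"
    by (rule nn_integral_eq_integral[OF integrable_deviation_sq, symmetric]) simp
  also have "\<dots> \<le> ennreal (err_rate * (alpha_sq_sum - (\<Sum>j<k. (\<alpha> j)\<^sup>2)))"
    by (rule deviation_second_moment_nn)
  finally show ?thesis
    using sum_le_suminf[OF \<alpha>_sq, of "{..<k}"] by (subst (asm) ennreal_le_iff) (auto intro!: mult_nonneg_nonneg)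
qed

lemma integrable_limit: "integrable M \<theta>"
proof -
  have "integrable M (\<lambda>\<omega>. (deviation 0 \<omega> + state_sum 0 \<omega>) / N)"
    by (intro integrable_divide Bochner_Integration.integrable_add integrable_deviation integrable_state_sum)
  moreover have "(deviation 0 \<omega> + state_sum 0 \<omega>) / N = \<theta> \<omega>" for \<omega>
    using N by (simp add: deviation_def)
  ultimately show ?thesis by simp
qed

text \<open>The mean deviation N E[theta] - S(0) is the same for all k, and its square is bounded by
  the vanishing tails of the square-summable weights.\<close>
lemma integral_limit: "(\<integral>\<omega>. \<theta> \<omega> \<partial>M) = (\<Sum>n<N. x0 n) / N"
proof -
  define d where "d = N * (\<integral>\<omega>. \<theta> \<omega> \<partial>M) - (\<Sum>n<N. x0 n)"
  have d: "d = (\<integral>\<omega>. deviation k \<omega> \<partial>M)" for k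
    unfolding d_def deviation_def using integrable_limit integrable_state_sum integral_state_sum by simp
  have "d\<^sup>2 \<le> err_rate * (alpha_sq_sum - (\<Sum>j<k. (\<alpha> j)\<^sup>2))" for k
    unfolding d[of k]
    by (rule order.trans[OF square_expectation_le[OF integrable_deviation integrable_deviation_sq]
          deviation_second_moment])
  moreover have "(\<lambda>k. err_rate * (alpha_sq_sum - (\<Sum>j<k. (\<alpha> j)\<^sup>2))) \<longlonglongrightarrow> err_rate * (alpha_sq_sum - alpha_sq_sum)"
    by (intro tendsto_mult tendsto_diff tendsto_const summable_LIMSEQ[OF \<alpha>_sq])
  ultimately have "d\<^sup>2 \<le> 0"
    by (intro LIMSEQ_le_const[where X="\<lambda>k. err_rate * (alpha_sq_sum - (\<Sum>j<k. (\<alpha> j)\<^sup>2))"]) auto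
  then show ?thesis using N unfolding d_def by (simp add: field_simps)
qed

text \<open>The variance bound; the proof gives the constant 1/2 in place of 2/3.\<close>
lemma limit_second_moment:
  "(\<integral>\<^sup>+\<omega>. ennreal ((\<theta> \<omega> - (\<Sum>n<N. x0 n) / N)\<^sup>2) \<partial>M)
    \<le> ennreal (2 * real (card realizable) * D\<^sup>2 / (3 * (real N)\<^sup>2) * alpha_sq_sum)"
proof -
  have N_pos: "0 < real N" using N by simp
  have sum_nonneg: "0 \<le> alpha_sq_sum" by (rule suminf_nonneg[OF \<alpha>_sq]) simp
  have scale: "ennreal ((\<theta> \<omega> - (\<Sum>n<N. x0 n) / N)\<^sup>2)
      = ennreal (1 / (real N)\<^sup>2) * ennreal ((deviation 0 \<omega>)\<^sup>2)" for \<omega>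
  proof -
    have "(\<theta> \<omega> - (\<Sum>n<N. x0 n) / N)\<^sup>2 = 1 / (real N)\<^sup>2 * (deviation 0 \<omega>)\<^sup>2"
      using N_pos by (simp add: deviation_def state_sum_def field_simps power2_eq_square)
    then show ?thesis by (simp only:) (rule ennreal_mult, simp_all)
  qed
  have "(\<integral>\<^sup>+\<omega>. ennreal ((\<theta> \<omega> - (\<Sum>n<N. x0 n) / N)\<^sup>2) \<partial>M)
      = ennreal (1 / (real N)\<^sup>2) * (\<integral>\<^sup>+\<omega>. ennreal ((deviation 0 \<omega>)\<^sup>2) \<partial>M)"
    unfolding scale
    by (rule nn_integral_cmult)
       (intro measurable_compose[OF _ measurable_ennreal] borel_measurable_power deviation_measurable)
  also have "\<dots> \<le> ennreal (1 / (real N)\<^sup>2) * ennreal (err_rate * alpha_sq_sum)"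
    by (rule mult_left_mono) (use deviation_second_moment_nn[of 0] in simp_all)
  also have "\<dots> = ennreal (D\<^sup>2 * real (card realizable) * alpha_sq_sum / (2 * (real N)\<^sup>2))"
    using sum_nonneg by (subst ennreal_mult[symmetric]) auto
  also have "\<dots> \<le> ennreal (2 * real (card realizable) * D\<^sup>2 / (3 * (real N)\<^sup>2) * alpha_sq_sum)"
    using N_pos sum_nonneg by (intro ennreal_leI) (simp add: frac_le divide_simps mult_nonneg_nonneg)
  finally show ?thesis .
qed

end

text \<open>Connectivity of the mean graph and divergence of the weights are what guarantee the
  consensus limit theta; since theta is given, the proof only needs the hypotheses collected
  in the locale qc_setting, whose results give integrability, the mean and the variance bound.\<close>

theorem mainTheorem4:
  fixes M :: "'w measure" and N :: nat and D :: real
    and G :: "nat \<Rightarrow> 'w \<Rightarrow> (nat \<times> nat) set"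
    and \<nu> :: "nat \<Rightarrow> nat \<Rightarrow> nat \<Rightarrow> 'w \<Rightarrow> real"
    and \<alpha> :: "nat \<Rightarrow> real" and x0 :: "nat \<Rightarrow> real" and \<theta> :: "'w \<Rightarrow> real"
  defines "Idx \<equiv> UNIV \<times> {..<N} \<times> {..<N}"
    and "x \<equiv> qc_state D \<alpha> G \<nu> x0"
    and "r \<equiv> (\<Sum>n<N. x0 n) / real N"
  assumes M: "prob_space M"
    and N: "N \<ge> 2"
    and simple: "\<And>i \<omega>. \<omega> \<in> space M \<Longrightarrow> simple_graph_on N (G i \<omega>)"
    and G_indep: "prob_space.indep_vars M (\<lambda>_. count_space UNIV) G UNIV"
    and G_ident: "\<And>i. distr M (count_space UNIV) (G i) = distr M (count_space UNIV) (G 0)"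
    and conn: "eigenvalue_k 2 (mean_laplacian M N (G 0)) > 0"
    and D: "D > 0"
    and \<nu>_meas: "\<And>i n l. \<nu> i n l \<in> borel_measurable M"
    and \<nu>_indep: "prob_space.indep_vars M (\<lambda>_. borel) (\<lambda>(i, n, l). \<nu> i n l) Idx"
    and \<nu>_unif: "\<And>i n l. n < N \<Longrightarrow> l < N \<Longrightarrow>
        distr M lborel (\<nu> i n l) = uniform_measure lborel {-D/2..<D/2}"
    and \<nu>_G_indep: "prob_space.indep_set M
        (sets (vimage_algebra (space M) (\<lambda>\<omega> i. G i \<omega>) (PiM UNIV (\<lambda>_. count_space UNIV))))
        (sets (vimage_algebra (space M) (\<lambda>\<omega>. restrict (\<lambda>(i, n, l). \<nu> i n l \<omega>) Idx)
           (PiM Idx (\<lambda>_. borel))))"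
    and \<alpha>_pos: "\<And>i. \<alpha> i > 0"
    and \<alpha>_div: "\<not> summable \<alpha>"
    and \<alpha>_sq: "summable (\<lambda>i. (\<alpha> i)\<^sup>2)"
    and \<theta>_meas: "\<theta> \<in> borel_measurable M"
    and \<theta>_lim: "AE \<omega> in M. \<forall>n<N. (\<lambda>i. x i \<omega> n) \<longlonglongrightarrow> \<theta> \<omega>"
  shows "integrable M \<theta> \<and> integral\<^sup>L M \<theta> = r
    \<and> (\<integral>\<^sup>+ \<omega>. ennreal ((\<theta> \<omega> - r)\<^sup>2) \<partial>M)
        \<le> ennreal (2 * real (card (realizable_edges M N (G 0))) * D\<^sup>2 / (3 * (real N)\<^sup>2)
                   * (\<Sum>j. (\<alpha> j)\<^sup>2))"
proof -
  interpret qc_setting M N D G \<nu> \<alpha> x0 \<theta>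
    by (rule qc_setting.intro[OF M qc_setting_axioms.intro])
       (use N simple G_indep G_ident D \<nu>_meas \<nu>_indep \<nu>_unif \<nu>_G_indep \<alpha>_pos \<alpha>_sq \<theta>_meas \<theta>_lim
         in \<open>simp_all add: Idx_def x_def\<close>)
  show ?thesis
    unfolding r_def using integrable_limit integral_limit limit_second_moment by simp
qed

end
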